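(* In a $\mathsf{B3}$-category, $\Pi_{\mathbf f}=e_1=e_2=\amalg_{\mathbf t}$, where $e_1=\rho_{\mathbf t}\circ(\check\lambda_{\mathbf t}\wedge\check\rho_{\mathbf t})\circ m_{\mathbf f,\mathbf t,\mathbf t,\mathbf f}\circ(\rho_{\mathbf f}^{-1}\vee\lambda_{\mathbf f}^{-1})\circ\check\lambda_{\mathbf f}^{-1}$ and $e_2=\rho_{\mathbf t}\circ(\check\rho_{\mathbf t}\wedge\check\lambda_{\mathbf t})\circ m_{\mathbf t,\mathbf f,\mathbf f,\mathbf t}\circ(\lambda_{\mathbf f}^{-1}\vee\rho_{\mathbf f}^{-1})\circ\check\lambda_{\mathbf f}^{-1}$ (maps $\mathbf f\to\mathbf t$). In particular every $\mathsf{B3}$-category is single-mixed.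
   Context: A *-autonomous category is a symmetric monoidal category $(\mathcal C,\wedge,\mathbf t)$ with natural isomorphisms $\alpha,\sigma$, $\rho_A\colon A\wedge\mathbf t\to A$, $\lambda_A\colon\mathbf t\wedge A\to A$, a contravariant functor $A\mapsto\bar A$ with natural isomorphism $\bar{\bar A}\cong A$, and a natural bijection $\mathrm{Hom}(A\wedge B,C)\cong\mathrm{Hom}(A,\bar B\vee C)$, where $A\vee B:=\overline{\bar B\wedge\bar A}$, $\mathbf f:=\bar{\mathbf t}$; $\vee$ is symmetric monoidal with unit isomorphisms $\check\rho_A\colon A\vee\mathbf f\to A$, $\check\lambda_A\colon\mathbf f\vee A\to A$. A $\mathsf{B1}$-category is a *-autonomous category such that (1) there is a Boolean algebra $\mathcal B$ and a function $F$ from objects to $\mathcal B$ with $F(A)\le F(B)$ iff $\mathrm{Hom}(A,B)\ne\emptyset$, and (2) every object $A$ carries a cocommutative $\wedge$-comonoid $\Delta_A\colon A\to A\wedge A$, $\Pi_A\colon A\to\mathbf t$; dually each object has a commutative $\vee$-monoid $\nabla_A\colon A\vee A\to A$, $\amalg_A\colon\mathbf f\to A$ (duals of $\Delta_{\bar A},\Pi_{\bar A}$). A $\mathsf{B2}$-category is a $\mathsf{B1}$-category with $\Pi_{\mathbf t}=\mathrm{id}_{\mathbf t}$ and $\Delta_{A\wedge B}=(A\wedge\sigma_{A,B}\wedge B)\circ(\Delta_A\wedge\Delta_B)$ (modulo associativity). A $\mathsf{B3}$-category is a $\mathsf{B2}$-category with: a medial map $m_{A,B,C,D}\colon(A\wedge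 B)\vee(C\wedge D)\to(A\vee C)\wedge(B\vee D)$ for all $A,B,C,D$, natural in all arguments, self-dual ($\overline{m_{A,B,C,D}}$ corresponds to $m_{\bar D,\bar B,\bar C,\bar A}$ under canonical isomorphisms), with $\Delta_{A\vee B}=m_{A,A,B,B}\circ(\Delta_A\vee\Delta_B)$; a nullary medial $\mathrm{nm}\colon\mathbf t\vee\mathbf t\to\mathbf t$ with $\Pi_{A\vee B}=\mathrm{nm}\circ(\Pi_A\vee\Pi_B)$ for all $A,B$; and $\Pi_{\mathbf t\vee\mathbf t}=\mathrm{nm}=\nabla_{\mathbf t}$. A $\mathsf{B1}$-category is single-mixed if $\Pi_{\mathbf f}=\amalg_{\mathbf t}$. *)

theory Defs
  imports Main
begin

text \<open>A category with all elements of type 'o as objects and all elements of type 'm as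
arrows (an arrow f goes from cdom f to ccod f); composition "ccomp g f" means g after f.\<close>

record ('o, 'm) sacat =
  cdom   :: "'m \<Rightarrow> 'o"
  ccod   :: "'m \<Rightarrow> 'o"
  cid    :: "'o \<Rightarrow> 'm"
  ccomp  :: "'m \<Rightarrow> 'm \<Rightarrow> 'm"
  tob    :: "'o \<Rightarrow> 'o \<Rightarrow> 'o"
  tar    :: "'m \<Rightarrow> 'm \<Rightarrow> 'm"
  tunit  :: "'o"
  calpha :: "'o \<Rightarrow> 'o \<Rightarrow> 'o \<Rightarrow> 'm"
  csigma :: "'o \<Rightarrow> 'o \<Rightarrow> 'm"
  crho   :: "'o \<Rightarrow> 'm"
  clam   :: "'o \<Rightarrow> 'm"
  bob    :: "'o \<Rightarrow> 'o"
  bar    :: "'m \<Rightarrow> 'm"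
  ceps   :: "'o \<Rightarrow> 'm"
  ccur   :: "'o \<Rightarrow> 'o \<Rightarrow> 'o \<Rightarrow> 'm \<Rightarrow> 'm"
  cdelta :: "'o \<Rightarrow> 'm"
  cpi    :: "'o \<Rightarrow> 'm"
  cmed   :: "'o \<Rightarrow> 'o \<Rightarrow> 'o \<Rightarrow> 'o \<Rightarrow> 'm"
  cnm    :: "'m"

definition hom :: "('o, 'm, 'z) sacat_scheme \<Rightarrow> 'o \<Rightarrow> 'o \<Rightarrow> 'm set" where
  "hom C A B = {f. cdom C f = A \<and> ccod C f = B}"

definition is_inverse :: "('o, 'm, 'z) sacat_scheme \<Rightarrow> 'm \<Rightarrow> 'm \<Rightarrow> bool" where
  "is_inverse C f g \<longleftrightarrow> g \<in> hom C (ccod C f) (cdom C f)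
     \<and> ccomp C g f = cid C (cdom C f) \<and> ccomp C f g = cid C (ccod C f)"

definition isom :: "('o, 'm, 'z) sacat_scheme \<Rightarrow> 'm \<Rightarrow> bool" where
  "isom C f \<longleftrightarrow> (\<exists>g. is_inverse C f g)"

definition invm :: "('o, 'm, 'z) sacat_scheme \<Rightarrow> 'm \<Rightarrow> 'm" where
  "invm C f = (THE g. is_inverse C f g)"

definition vob :: "('o, 'm, 'z) sacat_scheme \<Rightarrow> 'o \<Rightarrow> 'o \<Rightarrow> 'o" where
  "vob C A B = bob C (tob C (bob C B) (bob C A))"

definition var :: "('o, 'm, 'z) sacat_scheme \<Rightarrow> 'm \<Rightarrow> 'm \<Rightarrow> 'm" where
  "var C f g = bar C (tar C (bar C g) (bar C f))"

definition fob :: "('o, 'm, 'z) sacat_scheme \<Rightarrow> 'o" where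
  "fob C = bob C (tunit C)"

text \<open>Unit isomorphisms of \<or> (De Morgan duals of those of \<and>):
 rhoV A : A \<or> f \<rightarrow> A,  lamV A : f \<or> A \<rightarrow> A.\<close>

definition rhoV :: "('o, 'm, 'z) sacat_scheme \<Rightarrow> 'o \<Rightarrow> 'm" where
  "rhoV C A = ccomp C (ceps C A)
     (invm C (bar C (ccomp C (clam C (bob C A)) (tar C (ceps C (tunit C)) (cid C (bob C A))))))"

definition lamV :: "('o, 'm, 'z) sacat_scheme \<Rightarrow> 'o \<Rightarrow> 'm" where
  "lamV C A = ccomp C (ceps C A)
     (invm C (bar C (ccomp C (crho C (bob C A)) (tar C (cid C (bob C A)) (ceps C (tunit C))))))"

text \<open>The \<or>-monoid: duals of \<Delta>_{bar A} and \<Pi>_{bar A}.\<close>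

definition cnabla :: "('o, 'm, 'z) sacat_scheme \<Rightarrow> 'o \<Rightarrow> 'm" where
  "cnabla C A = ccomp C (ceps C A) (bar C (cdelta C (bob C A)))"

definition camalg :: "('o, 'm, 'z) sacat_scheme \<Rightarrow> 'o \<Rightarrow> 'm" where
  "camalg C A = ccomp C (ceps C A) (bar C (cpi C (bob C A)))"

definition category :: "('o, 'm, 'z) sacat_scheme \<Rightarrow> bool" where
  "category C \<longleftrightarrow>
     (\<forall>A. cid C A \<in> hom C A A)
   \<and> (\<forall>f g A B D. f \<in> hom C A B \<longrightarrow> g \<in> hom C B D \<longrightarrow> ccomp C g f \<in> hom C A D)
   \<and> (\<forall>f A B. f \<in> hom C A B \<longrightarrow> ccomp C f (cid C A) = f \<and> ccomp C (cid C B) f = f)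
   \<and> (\<forall>f g h A B D E. f \<in> hom C A B \<longrightarrow> g \<in> hom C B D \<longrightarrow> h \<in> hom C D E \<longrightarrow>
        ccomp C h (ccomp C g f) = ccomp C (ccomp C h g) f)"

definition sym_monoidal :: "('o, 'm, 'z) sacat_scheme \<Rightarrow> bool" where
  "sym_monoidal C \<longleftrightarrow> category C
   \<comment> \<open>tensor is a bifunctor\<close>
   \<and> (\<forall>f g A B A' B'. f \<in> hom C A B \<longrightarrow> g \<in> hom C A' B' \<longrightarrow>
        tar C f g \<in> hom C (tob C A A') (tob C B B'))
   \<and> (\<forall>A B. tar C (cid C A) (cid C B) = cid C (tob C A B))
   \<and> (\<forall>f f' g g' A B D A' B' D'. f \<in> hom C A B \<longrightarrow> f' \<in> hom C B D \<longrightarrow>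
        g \<in> hom C A' B' \<longrightarrow> g' \<in> hom C B' D' \<longrightarrow>
        tar C (ccomp C f' f) (ccomp C g' g) = ccomp C (tar C f' g') (tar C f g))
   \<comment> \<open>associator: natural isomorphism\<close>
   \<and> (\<forall>A B D. calpha C A B D \<in> hom C (tob C (tob C A B) D) (tob C A (tob C B D))
              \<and> isom C (calpha C A B D))
   \<and> (\<forall>f g h A B D A' B' D'. f \<in> hom C A A' \<longrightarrow> g \<in> hom C B B' \<longrightarrow> h \<in> hom C D D' \<longrightarrow>
        ccomp C (calpha C A' B' D') (tar C (tar C f g) h)
        = ccomp C (tar C f (tar C g h)) (calpha C A B D))
   \<comment> \<open>unitors: natural isomorphisms\<close>
   \<and> (\<forall>A. crho C A \<in> hom C (tob C A (tunit C)) A \<and> isom C (crho C A))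
   \<and> (\<forall>A. clam C A \<in> hom C (tob C (tunit C) A) A \<and> isom C (clam C A))
   \<and> (\<forall>f A B. f \<in> hom C A B \<longrightarrow>
        ccomp C (crho C B) (tar C f (cid C (tunit C))) = ccomp C f (crho C A)
      \<and> ccomp C (clam C B) (tar C (cid C (tunit C)) f) = ccomp C f (clam C A))
   \<comment> \<open>symmetry: natural, involutive\<close>
   \<and> (\<forall>A B. csigma C A B \<in> hom C (tob C A B) (tob C B A))
   \<and> (\<forall>f g A B A' B'. f \<in> hom C A B \<longrightarrow> g \<in> hom C A' B' \<longrightarrow>
        ccomp C (csigma C B B') (tar C f g) = ccomp C (tar C g f) (csigma C A A'))
   \<and> (\<forall>A B. ccomp C (csigma C B A) (csigma C A B) = cid C (tob C A B))
   \<comment> \<open>pentagon\<close>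
   \<and> (\<forall>A B D E.
        ccomp C (calpha C A B (tob C D E)) (calpha C (tob C A B) D E)
        = ccomp C (tar C (cid C A) (calpha C B D E))
            (ccomp C (calpha C A (tob C B D) E) (tar C (calpha C A B D) (cid C E))))
   \<comment> \<open>triangle\<close>
   \<and> (\<forall>A B. ccomp C (tar C (cid C A) (clam C B)) (calpha C A (tunit C) B)
             = tar C (crho C A) (cid C B))
   \<comment> \<open>hexagon\<close>
   \<and> (\<forall>A B D.
        ccomp C (calpha C B D A) (ccomp C (csigma C A (tob C B D)) (calpha C A B D))
        = ccomp C (tar C (cid C B) (csigma C A D))
            (ccomp C (calpha C B A D) (tar C (csigma C A B) (cid C D))))"

definition star_autonomous :: "('o, 'm, 'z) sacat_scheme \<Rightarrow> bool" where
  "star_autonomous C \<longleftrightarrow> sym_monoidal C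
   \<comment> \<open>bar is a contravariant functor\<close>
   \<and> (\<forall>f A B. f \<in> hom C A B \<longrightarrow> bar C f \<in> hom C (bob C B) (bob C A))
   \<and> (\<forall>A. bar C (cid C A) = cid C (bob C A))
   \<and> (\<forall>f g A B D. f \<in> hom C A B \<longrightarrow> g \<in> hom C B D \<longrightarrow>
        bar C (ccomp C g f) = ccomp C (bar C f) (bar C g))
   \<comment> \<open>natural isomorphism bar bar A \<cong> A\<close>
   \<and> (\<forall>A. ceps C A \<in> hom C (bob C (bob C A)) A \<and> isom C (ceps C A))
   \<and> (\<forall>f A B. f \<in> hom C A B \<longrightarrow>
        ccomp C f (ceps C A) = ccomp C (ceps C B) (bar C (bar C f)))
   \<comment> \<open>natural bijection Hom(A \<and> B, D) \<cong> Hom(A, bar B \<or> D)\<close>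
   \<and> (\<forall>A B D. bij_betw (ccur C A B D) (hom C (tob C A B) D) (hom C A (vob C (bob C B) D)))
   \<and> (\<forall>a f A' A B D. a \<in> hom C A' A \<longrightarrow> f \<in> hom C (tob C A B) D \<longrightarrow>
        ccur C A' B D (ccomp C f (tar C a (cid C B))) = ccomp C (ccur C A B D f) a)
   \<and> (\<forall>b f A B' B D. b \<in> hom C B' B \<longrightarrow> f \<in> hom C (tob C A B) D \<longrightarrow>
        ccur C A B' D (ccomp C f (tar C (cid C A) b))
        = ccomp C (var C (bar C b) (cid C D)) (ccur C A B D f))
   \<and> (\<forall>c f A B D D'. c \<in> hom C D D' \<longrightarrow> f \<in> hom C (tob C A B) D \<longrightarrow>
        ccur C A B D' (ccomp C c f)
        = ccomp C (var C (cid C (bob C B)) c) (ccur C A B D f))"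

definition B1 :: "('o, 'm, 'z) sacat_scheme \<Rightarrow> ('o \<Rightarrow> 'b::boolean_algebra) \<Rightarrow> bool" where
  "B1 C F \<longleftrightarrow> star_autonomous C
   \<and> (\<forall>A B. F A \<le> F B \<longleftrightarrow> hom C A B \<noteq> {})
   \<comment> \<open>every object carries a cocommutative \<and>-comonoid\<close>
   \<and> (\<forall>A. cdelta C A \<in> hom C A (tob C A A) \<and> cpi C A \<in> hom C A (tunit C))
   \<and> (\<forall>A. ccomp C (calpha C A A A) (ccomp C (tar C (cdelta C A) (cid C A)) (cdelta C A))
          = ccomp C (tar C (cid C A) (cdelta C A)) (cdelta C A))
   \<and> (\<forall>A. ccomp C (clam C A) (ccomp C (tar C (cpi C A) (cid C A)) (cdelta C A)) = cid C A)
   \<and> (\<forall>A. ccomp C (crho C A) (ccomp C (tar C (cid C A) (cpi C A)) (cdelta C A)) = cid C A)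
   \<and> (\<forall>A. ccomp C (csigma C A A) (cdelta C A) = cdelta C A)"

text \<open>Canonical map (A\<and>A)\<and>(B\<and>B) \<rightarrow> (A\<and>B)\<and>(A\<and>B) built from associators and
  the symmetry on the middle factors.\<close>

definition shuffle :: "('o, 'm, 'z) sacat_scheme \<Rightarrow> 'o \<Rightarrow> 'o \<Rightarrow> 'm" where
  "shuffle C A B =
     ccomp C (invm C (calpha C A B (tob C A B)))
    (ccomp C (tar C (cid C A) (calpha C B A B))
    (ccomp C (tar C (cid C A) (tar C (csigma C A B) (cid C B)))
    (ccomp C (tar C (cid C A) (invm C (calpha C A B B)))
             (calpha C A A (tob C B B)))))"

definition B2 :: "('o, 'm, 'z) sacat_scheme \<Rightarrow> ('o \<Rightarrow> 'b::boolean_algebra) \<Rightarrow> bool" where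
  "B2 C F \<longleftrightarrow> B1 C F
   \<and> cpi C (tunit C) = cid C (tunit C)
   \<and> (\<forall>A B. cdelta C (tob C A B) = ccomp C (shuffle C A B) (tar C (cdelta C A) (cdelta C B)))"

text \<open>Self-duality of the medial: the canonical isomorphisms
  bar((A\<or>C)\<and>(B\<or>D)) \<rightarrow> (bar D\<and>bar B)\<or>(bar C\<and>bar A) and
  bar((A\<and>B)\<or>(C\<and>D)) \<rightarrow> (bar D\<or>bar C)\<and>(bar B\<or>bar A).
  dmt P Q : bar(P\<and>Q) \<rightarrow> bar Q \<or> bar P.\<close>

definition dmt :: "('o, 'm, 'z) sacat_scheme \<Rightarrow> 'o \<Rightarrow> 'o \<Rightarrow> 'm" where
  "dmt C P Q = bar C (tar C (ceps C P) (ceps C Q))"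

definition medial_selfdual :: "('o, 'm, 'z) sacat_scheme \<Rightarrow> bool" where
  "medial_selfdual C \<longleftrightarrow> (\<forall>A B D E.
     ccomp C (tar C (dmt C D E) (dmt C A B))
       (ccomp C (ceps C (tob C (bob C (tob C D E)) (bob C (tob C A B))))
                (bar C (cmed C A B D E)))
     = ccomp C (cmed C (bob C E) (bob C B) (bob C D) (bob C A))
         (ccomp C (var C (ceps C (tob C (bob C E) (bob C B)))
                         (ceps C (tob C (bob C D) (bob C A))))
                  (dmt C (vob C A D) (vob C B E))))"

definition B3 :: "('o, 'm, 'z) sacat_scheme \<Rightarrow> ('o \<Rightarrow> 'b::boolean_algebra) \<Rightarrow> bool" where
  "B3 C F \<longleftrightarrow> B2 C F
   \<comment> \<open>medial map m_{A,B,D,E} : (A\<and>B)\<or>(D\<and>E) \<rightarrow> (A\<or>D)\<and>(B\<or>E), natural in all arguments\<close>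
   \<and> (\<forall>A B D E. cmed C A B D E \<in>
        hom C (vob C (tob C A B) (tob C D E)) (tob C (vob C A D) (vob C B E)))
   \<and> (\<forall>f1 f2 f3 f4 A B D E A' B' D' E'.
        f1 \<in> hom C A A' \<longrightarrow> f2 \<in> hom C B B' \<longrightarrow> f3 \<in> hom C D D' \<longrightarrow> f4 \<in> hom C E E' \<longrightarrow>
        ccomp C (cmed C A' B' D' E') (var C (tar C f1 f2) (tar C f3 f4))
        = ccomp C (tar C (var C f1 f3) (var C f2 f4)) (cmed C A B D E))
   \<and> medial_selfdual C
   \<and> (\<forall>A B. cdelta C (vob C A B) = ccomp C (cmed C A A B B) (var C (cdelta C A) (cdelta C B)))
   \<comment> \<open>nullary medial nm : t\<or>t \<rightarrow> t\<close>
   \<and> cnm C \<in> hom C (vob C (tunit C) (tunit C)) (tunit C)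
   \<and> (\<forall>A B. cpi C (vob C A B) = ccomp C (cnm C) (var C (cpi C A) (cpi C B)))
   \<and> cpi C (vob C (tunit C) (tunit C)) = cnm C
   \<and> cnm C = cnabla C (tunit C)"

definition single_mixed :: "('o, 'm, 'z) sacat_scheme \<Rightarrow> bool" where
  "single_mixed C \<longleftrightarrow> cpi C (fob C) = camalg C (tunit C)"

definition e1 :: "('o, 'm, 'z) sacat_scheme \<Rightarrow> 'm" where
  "e1 C = ccomp C (crho C (tunit C))
     (ccomp C (tar C (lamV C (tunit C)) (rhoV C (tunit C)))
     (ccomp C (cmed C (fob C) (tunit C) (tunit C) (fob C))
     (ccomp C (var C (invm C (crho C (fob C))) (invm C (clam C (fob C))))
              (invm C (lamV C (fob C))))))"

definition e2 :: "('o, 'm, 'z) sacat_scheme \<Rightarrow> 'm" where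
  "e2 C = ccomp C (crho C (tunit C))
     (ccomp C (tar C (rhoV C (tunit C)) (lamV C (tunit C)))
     (ccomp C (cmed C (tunit C) (fob C) (fob C) (tunit C))
     (ccomp C (var C (invm C (clam C (fob C))) (invm C (crho C (fob C))))
              (invm C (lamV C (fob C))))))"

end

theory Submission
  imports Defs
begin

text \<open>For an arrow \<open>h : A\<^sup>\<bottom> \<rightarrow> A\<close> put \<open>dualize h = \<epsilon>\<^sub>A \<circ> h\<^sup>\<bottom>\<close>; then \<open>\<amalg>\<^sub>t = dualize \<Pi>\<^sub>f\<close>,
  and we let \<open>a : f \<rightarrow> t\<close> be the arrow with \<open>dualize a = \<Pi>\<^sub>f\<close>. Dualizing the counit laws of
  \<open>(\<Delta>\<^sub>f, \<Pi>\<^sub>f)\<close> shows that \<open>a\<close> is a two-sided unit for the nullary medial \<open>nm = \<nabla>\<^sub>t\<close>.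
  With naturality of the medial, \<open>\<Delta>\<^sub>t\<^sub>\<or>\<^sub>t = m \<circ> (\<Delta>\<^sub>t \<or> \<Delta>\<^sub>t)\<close> and \<open>\<Pi>\<^sub>t\<^sub>\<or>\<^sub>t = nm\<close>
  this collapses both \<open>e\<^sub>1\<close> and \<open>e\<^sub>2\<close> to \<open>a\<close>.

  On the other hand, self-duality of the medial turns \<open>dualize e\<^sub>1\<close> into \<open>e\<^sub>2\<close>, factor by factor.
  Since no coherence between \<open>\<epsilon>\<^bsub>A\<^sup>\<bottom>\<^esub>\<close> and \<open>\<epsilon>\<^sub>A\<^sup>\<bottom>\<close> is assumed, this only holds up to
  the automorphisms (twists) measuring their failure to be inverse; but twists commute past every arrow
  \<open>f \<rightarrow> t\<close> and cancel. Hence \<open>a = e\<^sub>1 = e\<^sub>2 = dualize e\<^sub>1 = dualize a = \<Pi>\<^sub>f\<close>, and then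
  \<open>\<amalg>\<^sub>t = dualize \<Pi>\<^sub>f = dualize a = \<Pi>\<^sub>f\<close>.\<close>

locale star_autonomous_category =
  fixes C :: "('o, 'm, 'z) sacat_scheme"
  assumes star_autonomous: "star_autonomous C"
begin

abbreviation "dom\<^sub>C f \<equiv> cdom C f"
abbreviation "cod\<^sub>C f \<equiv> ccod C f"
abbreviation "id\<^sub>C A \<equiv> cid C A"
abbreviation "inv\<^sub>C f \<equiv> invm C f"
abbreviation "iso\<^sub>C f \<equiv> isom C f"
text \<open>On objects, \<open>\<oplus>\<^sub>o\<close> abbreviates the
  unfolded form of \<^const>\<open>vob\<close>, so that domains and codomains have a unique simp normal form.\<close>

abbreviation compose (infixr "\<cdot>" 55) where "g \<cdot> f \<equiv> ccomp C g f"
abbreviation tensor (infix "\<otimes>" 60) where "f \<otimes> g \<equiv> tar C f g"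
abbreviation par (infix "\<oplus>" 60) where "f \<oplus> g \<equiv> var C f g"
abbreviation tensor_ob (infix "\<otimes>\<^sub>o" 60) where "A \<otimes>\<^sub>o B \<equiv> tob C A B"
abbreviation dual ("_\<^sup>\<bottom>" [1000] 1000) where "f\<^sup>\<bottom> \<equiv> bar C f"
abbreviation dual_ob ("_\<^sup>\<bottom>\<^sub>o" [1000] 1000) where "A\<^sup>\<bottom>\<^sub>o \<equiv> bob C A"
abbreviation par_ob (infix "\<oplus>\<^sub>o" 60) where "A \<oplus>\<^sub>o B \<equiv> (B\<^sup>\<bottom>\<^sub>o \<otimes>\<^sub>o A\<^sup>\<bottom>\<^sub>o)\<^sup>\<bottom>\<^sub>o"
abbreviation unit_t ("\<^bold>t") where "\<^bold>t \<equiv> tunit C"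
abbreviation unit_f ("\<^bold>f") where "\<^bold>f \<equiv> \<^bold>t\<^sup>\<bottom>\<^sub>o"
abbreviation "eps A \<equiv> ceps C A"
abbreviation "rho A \<equiv> crho C A"
abbreviation "lam A \<equiv> clam C A"

lemma sym_monoidal: "sym_monoidal C"
  using star_autonomous unfolding star_autonomous_def by blast

lemma category: "category C"
  using sym_monoidal unfolding sym_monoidal_def by blast

lemma arr_hom: "f \<in> hom C (dom\<^sub>C f) (cod\<^sub>C f)"
  by (simp add: hom_def)

lemma id_dom [simp]: "dom\<^sub>C (id\<^sub>C A) = A"
  and id_cod [simp]: "cod\<^sub>C (id\<^sub>C A) = A"
  using category unfolding category_def hom_def by auto

lemma comp_dom [simp]: "cod\<^sub>C f = dom\<^sub>C g \<Longrightarrow> dom\<^sub>C (g \<cdot> f) = dom\<^sub>C f"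
  and comp_cod [simp]: "cod\<^sub>C f = dom\<^sub>C g \<Longrightarrow> cod\<^sub>C (g \<cdot> f) = cod\<^sub>C g"
proof -
  have "\<forall>f g A B D. f \<in> hom C A B \<longrightarrow> g \<in> hom C B D \<longrightarrow> g \<cdot> f \<in> hom C A D"
    using category unfolding category_def by (elim conjE) assumption
  moreover assume "cod\<^sub>C f = dom\<^sub>C g"
  ultimately have "g \<cdot> f \<in> hom C (dom\<^sub>C f) (cod\<^sub>C g)"
    using arr_hom[of f] arr_hom[of g] by simp
  then show "dom\<^sub>C (g \<cdot> f) = dom\<^sub>C f" "cod\<^sub>C (g \<cdot> f) = cod\<^sub>C g"
    by (simp_all add: hom_def)
qed

lemma comp_id_right [simp]: "dom\<^sub>C f = A \<Longrightarrow> f \<cdot> id\<^sub>C A = f"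
  and comp_id_left [simp]: "cod\<^sub>C f = B \<Longrightarrow> id\<^sub>C B \<cdot> f = f"
  using category unfolding category_def hom_def by auto

lemma comp_assoc [simp]:
  assumes "cod\<^sub>C f = dom\<^sub>C g" "cod\<^sub>C g = dom\<^sub>C h"
  shows "(h \<cdot> g) \<cdot> f = h \<cdot> (g \<cdot> f)"
proof -
  have "\<forall>f g h A B D E. f \<in> hom C A B \<longrightarrow> g \<in> hom C B D \<longrightarrow> h \<in> hom C D E \<longrightarrow>
          h \<cdot> (g \<cdot> f) = (h \<cdot> g) \<cdot> f"
    using category unfolding category_def by (elim conjE) assumption
  from this[rule_format, OF arr_hom[of f], of g "cod\<^sub>C g" h "cod\<^sub>C h"] show ?thesis
    using assms by (simp add: hom_def)
qed

lemma comp_reduce: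
  "g \<cdot> f = h \<Longrightarrow> cod\<^sub>C f = dom\<^sub>C g \<Longrightarrow> cod\<^sub>C k = dom\<^sub>C f \<Longrightarrow> g \<cdot> (f \<cdot> k) = h \<cdot> k"
  by (simp flip: comp_assoc)

lemma comp_reduce3:
  "g \<cdot> (f \<cdot> e) = h \<Longrightarrow> cod\<^sub>C f = dom\<^sub>C g \<Longrightarrow> cod\<^sub>C e = dom\<^sub>C f \<Longrightarrow> cod\<^sub>C k = dom\<^sub>C e \<Longrightarrow>
    g \<cdot> (f \<cdot> (e \<cdot> k)) = h \<cdot> k"
  by (simp flip: comp_assoc)

lemma tensor_dom [simp]: "dom\<^sub>C (f \<otimes> g) = dom\<^sub>C f \<otimes>\<^sub>o dom\<^sub>C g"
  and tensor_cod [simp]: "cod\<^sub>C (f \<otimes> g) = cod\<^sub>C f \<otimes>\<^sub>o cod\<^sub>C g"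
proof -
  have "\<forall>f g A B A' B'. f \<in> hom C A B \<longrightarrow> g \<in> hom C A' B' \<longrightarrow> f \<otimes> g \<in> hom C (A \<otimes>\<^sub>o A') (B \<otimes>\<^sub>o B')"
    using sym_monoidal unfolding sym_monoidal_def by (elim conjE) assumption
  from this[rule_format, OF arr_hom arr_hom]
  show "dom\<^sub>C (f \<otimes> g) = dom\<^sub>C f \<otimes>\<^sub>o dom\<^sub>C g" "cod\<^sub>C (f \<otimes> g) = cod\<^sub>C f \<otimes>\<^sub>o cod\<^sub>C g"
    by (simp_all add: hom_def)
qed

lemma tensor_id [simp]: "id\<^sub>C A \<otimes> id\<^sub>C B = id\<^sub>C (A \<otimes>\<^sub>o B)"
proof -
  have "\<forall>A B. id\<^sub>C A \<otimes> id\<^sub>C B = id\<^sub>C (A \<otimes>\<^sub>o B)"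
    using sym_monoidal unfolding sym_monoidal_def by (elim conjE) assumption
  then show ?thesis by blast
qed

lemma tensor_comp:
  assumes "cod\<^sub>C f = dom\<^sub>C f'" "cod\<^sub>C g = dom\<^sub>C g'"
  shows "(f' \<cdot> f) \<otimes> (g' \<cdot> g) = (f' \<otimes> g') \<cdot> (f \<otimes> g)"
proof -
  have "\<forall>f f' g g' A B D A' B' D'. f \<in> hom C A B \<longrightarrow> f' \<in> hom C B D \<longrightarrow>
          g \<in> hom C A' B' \<longrightarrow> g' \<in> hom C B' D' \<longrightarrow> (f' \<cdot> f) \<otimes> (g' \<cdot> g) = (f' \<otimes> g') \<cdot> (f \<otimes> g)"
    using sym_monoidal unfolding sym_monoidal_def by (elim conjE) assumption
  from this[rule_format, OF arr_hom[of f] _ arr_hom[of g], of f' "cod\<^sub>C f'" g' "cod\<^sub>C g'"]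
  show ?thesis
    using assms by (simp add: hom_def)
qed

lemma rho_dom [simp]: "dom\<^sub>C (rho A) = A \<otimes>\<^sub>o \<^bold>t"
  and rho_cod [simp]: "cod\<^sub>C (rho A) = A"
  and rho_iso [simp]: "iso\<^sub>C (rho A)"
  and lam_dom [simp]: "dom\<^sub>C (lam A) = \<^bold>t \<otimes>\<^sub>o A"
  and lam_cod [simp]: "cod\<^sub>C (lam A) = A"
  and lam_iso [simp]: "iso\<^sub>C (lam A)"
  using sym_monoidal unfolding sym_monoidal_def hom_def by simp_all

lemma unitors_natural:
  assumes "dom\<^sub>C f = A" "cod\<^sub>C f = B"
  shows rho_natural: "rho B \<cdot> (f \<otimes> id\<^sub>C \<^bold>t) = f \<cdot> rho A"
    and lam_natural: "lam B \<cdot> (id\<^sub>C \<^bold>t \<otimes> f) = f \<cdot> lam A"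
proof -
  have "\<forall>f A B. f \<in> hom C A B \<longrightarrow>
          rho B \<cdot> (f \<otimes> id\<^sub>C \<^bold>t) = f \<cdot> rho A \<and> lam B \<cdot> (id\<^sub>C \<^bold>t \<otimes> f) = f \<cdot> lam A"
    using sym_monoidal unfolding sym_monoidal_def by (elim conjE) assumption
  from this[rule_format, of f A B] assms
  show "rho B \<cdot> (f \<otimes> id\<^sub>C \<^bold>t) = f \<cdot> rho A" "lam B \<cdot> (id\<^sub>C \<^bold>t \<otimes> f) = f \<cdot> lam A"
    by (simp_all add: hom_def)
qed

lemma dual_dom [simp]: "dom\<^sub>C (f\<^sup>\<bottom>) = (cod\<^sub>C f)\<^sup>\<bottom>\<^sub>o"
  and dual_cod [simp]: "cod\<^sub>C (f\<^sup>\<bottom>) = (dom\<^sub>C f)\<^sup>\<bottom>\<^sub>o"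
proof -
  have "\<forall>f A B. f \<in> hom C A B \<longrightarrow> f\<^sup>\<bottom> \<in> hom C (B\<^sup>\<bottom>\<^sub>o) (A\<^sup>\<bottom>\<^sub>o)"
    using star_autonomous unfolding star_autonomous_def by (elim conjE) assumption
  from this[rule_format, OF arr_hom]
  show "dom\<^sub>C (f\<^sup>\<bottom>) = (cod\<^sub>C f)\<^sup>\<bottom>\<^sub>o" "cod\<^sub>C (f\<^sup>\<bottom>) = (dom\<^sub>C f)\<^sup>\<bottom>\<^sub>o"
    by (simp_all add: hom_def)
qed

lemma dual_id [simp]: "(id\<^sub>C A)\<^sup>\<bottom> = id\<^sub>C (A\<^sup>\<bottom>\<^sub>o)"
proof -
  have "\<forall>A. (id\<^sub>C A)\<^sup>\<bottom> = id\<^sub>C (A\<^sup>\<bottom>\<^sub>o)"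
    using star_autonomous unfolding star_autonomous_def by (elim conjE) assumption
  then show ?thesis by blast
qed

lemma dual_comp:
  assumes "cod\<^sub>C f = dom\<^sub>C g"
  shows "(g \<cdot> f)\<^sup>\<bottom> = f\<^sup>\<bottom> \<cdot> g\<^sup>\<bottom>"
proof -
  have "\<forall>f g A B D. f \<in> hom C A B \<longrightarrow> g \<in> hom C B D \<longrightarrow> (g \<cdot> f)\<^sup>\<bottom> = f\<^sup>\<bottom> \<cdot> g\<^sup>\<bottom>"
    using star_autonomous unfolding star_autonomous_def by (elim conjE) assumption
  from this[rule_format, OF arr_hom[of f], of g "cod\<^sub>C g"] show ?thesis
    using assms by (simp add: hom_def)
qed

lemma eps_dom [simp]: "dom\<^sub>C (eps A) = A\<^sup>\<bottom>\<^sub>o\<^sup>\<bottom>\<^sub>o"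
  and eps_cod [simp]: "cod\<^sub>C (eps A) = A"
  and eps_iso [simp]: "iso\<^sub>C (eps A)"
  using star_autonomous unfolding star_autonomous_def hom_def by simp_all

lemma eps_natural:
  assumes "dom\<^sub>C f = A" "cod\<^sub>C f = B"
  shows "f \<cdot> eps A = eps B \<cdot> f\<^sup>\<bottom>\<^sup>\<bottom>"
proof -
  have "\<forall>f A B. f \<in> hom C A B \<longrightarrow> f \<cdot> eps A = eps B \<cdot> f\<^sup>\<bottom>\<^sup>\<bottom>"
    using star_autonomous unfolding star_autonomous_def by (elim conjE) assumption
  from this[rule_format, of f A B] assms show ?thesis
    by (simp add: hom_def)
qed

subsection \<open>Isomorphisms\<close>

lemma inv_unique:
  assumes "cod\<^sub>C f = dom\<^sub>C g" "cod\<^sub>C g = dom\<^sub>C f" "g \<cdot> f = id\<^sub>C (dom\<^sub>C f)" "f \<cdot> g = id\<^sub>C (cod\<^sub>C f)"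
  shows "inv\<^sub>C f = g"
  unfolding invm_def
proof (rule the_equality)
  show "is_inverse C f g"
    using assms unfolding is_inverse_def hom_def by auto
next
  fix h
  assume "is_inverse C f h"
  then have h: "dom\<^sub>C h = cod\<^sub>C f" "cod\<^sub>C h = dom\<^sub>C f" "h \<cdot> f = id\<^sub>C (dom\<^sub>C f)"
    unfolding is_inverse_def hom_def by auto
  have "g = (h \<cdot> f) \<cdot> g" using assms h by simp
  also have "\<dots> = h \<cdot> (f \<cdot> g)" by (rule comp_assoc) (use assms h in simp_all)
  also have "\<dots> = h" using assms h by simp
  finally show "h = g" by simp
qed

lemma iso_inverse:
  assumes "iso\<^sub>C f"
  shows inv_dom [simp]: "dom\<^sub>C (inv\<^sub>C f) = cod\<^sub>C f"
    and inv_cod [simp]: "cod\<^sub>C (inv\<^sub>C f) = dom\<^sub>C f"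
    and inv_comp_left [simp]: "inv\<^sub>C f \<cdot> f = id\<^sub>C (dom\<^sub>C f)"
    and inv_comp_right [simp]: "f \<cdot> inv\<^sub>C f = id\<^sub>C (cod\<^sub>C f)"
proof -
  obtain g where "is_inverse C f g"
    using assms unfolding isom_def by blast
  then have g: "dom\<^sub>C g = cod\<^sub>C f" "cod\<^sub>C g = dom\<^sub>C f" "g \<cdot> f = id\<^sub>C (dom\<^sub>C f)" "f \<cdot> g = id\<^sub>C (cod\<^sub>C f)"
    unfolding is_inverse_def hom_def by auto
  then have "inv\<^sub>C f = g" by (intro inv_unique) auto
  with g show "dom\<^sub>C (inv\<^sub>C f) = cod\<^sub>C f" "cod\<^sub>C (inv\<^sub>C f) = dom\<^sub>C f"
    "inv\<^sub>C f \<cdot> f = id\<^sub>C (dom\<^sub>C f)" "f \<cdot> inv\<^sub>C f = id\<^sub>C (cod\<^sub>C f)"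
    by simp_all
qed

lemma inv_comp_cancel [simp]: "iso\<^sub>C f \<Longrightarrow> cod\<^sub>C h = dom\<^sub>C f \<Longrightarrow> inv\<^sub>C f \<cdot> (f \<cdot> h) = h"
  by (simp flip: comp_assoc)

lemma comp_inv_cancel [simp]: "iso\<^sub>C f \<Longrightarrow> cod\<^sub>C h = cod\<^sub>C f \<Longrightarrow> f \<cdot> (inv\<^sub>C f \<cdot> h) = h"
  by (simp flip: comp_assoc)

lemma eq_inv_comp: "iso\<^sub>C f \<Longrightarrow> cod\<^sub>C g = dom\<^sub>C f \<Longrightarrow> f \<cdot> g = h \<Longrightarrow> g = inv\<^sub>C f \<cdot> h"
  by auto

lemma isoI:
  "cod\<^sub>C f = dom\<^sub>C g \<Longrightarrow> cod\<^sub>C g = dom\<^sub>C f \<Longrightarrow> g \<cdot> f = id\<^sub>C (dom\<^sub>C f) \<Longrightarrow> f \<cdot> g = id\<^sub>C (cod\<^sub>C f) \<Longrightarrow>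
    iso\<^sub>C f"
  unfolding isom_def is_inverse_def hom_def by auto

lemma inv_eqI:
  assumes "iso\<^sub>C f" "dom\<^sub>C g = cod\<^sub>C f" "cod\<^sub>C g = dom\<^sub>C f" "f \<cdot> g = id\<^sub>C (cod\<^sub>C f)"
  shows "g = inv\<^sub>C f"
proof -
  have "g = inv\<^sub>C f \<cdot> (f \<cdot> g)" using assms(1,3) by simp
  then show ?thesis using assms by simp
qed

lemma iso_id [simp]: "iso\<^sub>C (id\<^sub>C A)"
  by (rule isoI[where g = "id\<^sub>C A"]) simp_all

lemma iso_inv [simp]: "iso\<^sub>C f \<Longrightarrow> iso\<^sub>C (inv\<^sub>C f)"
  by (rule isoI[where g = f]) simp_all

lemma inv_id [simp]: "inv\<^sub>C (id\<^sub>C A) = id\<^sub>C A"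
  by (rule inv_unique) simp_all

lemma inv_inv [simp]: "iso\<^sub>C f \<Longrightarrow> inv\<^sub>C (inv\<^sub>C f) = f"
  by (rule inv_unique) simp_all

lemma iso_comp [simp]: "iso\<^sub>C f \<Longrightarrow> iso\<^sub>C g \<Longrightarrow> cod\<^sub>C f = dom\<^sub>C g \<Longrightarrow> iso\<^sub>C (g \<cdot> f)"
  by (rule isoI[where g = "inv\<^sub>C f \<cdot> inv\<^sub>C g"]) simp_all

lemma inv_comp: "iso\<^sub>C f \<Longrightarrow> iso\<^sub>C g \<Longrightarrow> cod\<^sub>C f = dom\<^sub>C g \<Longrightarrow> inv\<^sub>C (g \<cdot> f) = inv\<^sub>C f \<cdot> inv\<^sub>C g"
  by (rule inv_unique) simp_all

lemma iso_tensor [simp]: "iso\<^sub>C f \<Longrightarrow> iso\<^sub>C g \<Longrightarrow> iso\<^sub>C (f \<otimes> g)"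
  by (rule isoI[where g = "inv\<^sub>C f \<otimes> inv\<^sub>C g"]) (simp_all flip: tensor_comp)

lemma inv_tensor: "iso\<^sub>C f \<Longrightarrow> iso\<^sub>C g \<Longrightarrow> inv\<^sub>C (f \<otimes> g) = inv\<^sub>C f \<otimes> inv\<^sub>C g"
  by (rule inv_unique) (simp_all flip: tensor_comp)

lemma iso_dual [simp]: "iso\<^sub>C f \<Longrightarrow> iso\<^sub>C (f\<^sup>\<bottom>)"
  by (rule isoI[where g = "(inv\<^sub>C f)\<^sup>\<bottom>"]) (simp_all flip: dual_comp)

lemma inv_dual: "iso\<^sub>C f \<Longrightarrow> inv\<^sub>C (f\<^sup>\<bottom>) = (inv\<^sub>C f)\<^sup>\<bottom>"
  by (rule inv_unique) (simp_all flip: dual_comp)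

lemma iso_cancel_left:
  assumes "iso\<^sub>C h" "cod\<^sub>C f = dom\<^sub>C h" "cod\<^sub>C g = dom\<^sub>C h" "h \<cdot> f = h \<cdot> g"
  shows "f = g"
proof -
  have "f = inv\<^sub>C h \<cdot> (h \<cdot> f)" using assms(1,2) by simp
  then show ?thesis using assms by simp
qed

lemma iso_cancel_left_iff:
  "iso\<^sub>C h \<Longrightarrow> cod\<^sub>C f = dom\<^sub>C h \<Longrightarrow> cod\<^sub>C g = dom\<^sub>C h \<Longrightarrow> h \<cdot> f = h \<cdot> g \<longleftrightarrow> f = g"
  using iso_cancel_left by blast

lemma iso_cancel_right:
  assumes "iso\<^sub>C h" "dom\<^sub>C f = cod\<^sub>C h" "dom\<^sub>C g = cod\<^sub>C h" "f \<cdot> h = g \<cdot> h"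
  shows "f = g"
proof -
  have "f = (f \<cdot> h) \<cdot> inv\<^sub>C h" using assms(1,2) by simp
  then show ?thesis using assms by simp
qed

lemma iso_conjugate:
  assumes "iso\<^sub>C a" "iso\<^sub>C b" "cod\<^sub>C a = dom\<^sub>C x" "cod\<^sub>C y = dom\<^sub>C b" "cod\<^sub>C x = cod\<^sub>C b" "dom\<^sub>C y = dom\<^sub>C a"
    and "x \<cdot> a = b \<cdot> y"
  shows "inv\<^sub>C b \<cdot> x = y \<cdot> inv\<^sub>C a"
proof (rule iso_cancel_left[OF \<open>iso\<^sub>C b\<close>])
  show "b \<cdot> (inv\<^sub>C b \<cdot> x) = b \<cdot> (y \<cdot> inv\<^sub>C a)"
    by (rule iso_cancel_right[OF \<open>iso\<^sub>C a\<close>]) (use assms in simp_all)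
qed (use assms in simp_all)

lemma inv_rho_natural:
  assumes "dom\<^sub>C h = A" "cod\<^sub>C h = B"
  shows "(h \<otimes> id\<^sub>C \<^bold>t) \<cdot> inv\<^sub>C (rho A) = inv\<^sub>C (rho B) \<cdot> h"
  by (rule iso_conjugate[OF _ _ _ _ _ _ rho_natural[OF assms, symmetric], symmetric]) (use assms in simp_all)

lemma inv_lam_natural:
  assumes "dom\<^sub>C h = A" "cod\<^sub>C h = B"
  shows "(id\<^sub>C \<^bold>t \<otimes> h) \<cdot> inv\<^sub>C (lam A) = inv\<^sub>C (lam B) \<cdot> h"
  by (rule iso_conjugate[OF _ _ _ _ _ _ lam_natural[OF assms, symmetric], symmetric]) (use assms in simp_all)

lemma dual_faithful:
  assumes "dom\<^sub>C f = dom\<^sub>C g" "cod\<^sub>C f = cod\<^sub>C g" "f\<^sup>\<bottom> = g\<^sup>\<bottom>"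
  shows "f = g"
proof (rule iso_cancel_right[OF eps_iso])
  show "f \<cdot> eps (dom\<^sub>C f) = g \<cdot> eps (dom\<^sub>C f)"
    using eps_natural[of f] eps_natural[of g] assms by simp
qed (use assms in simp_all)

lemma par_dom [simp]: "dom\<^sub>C (f \<oplus> g) = dom\<^sub>C f \<oplus>\<^sub>o dom\<^sub>C g"
  and par_cod [simp]: "cod\<^sub>C (f \<oplus> g) = cod\<^sub>C f \<oplus>\<^sub>o cod\<^sub>C g"
  unfolding var_def by simp_all

lemma par_comp:
  "cod\<^sub>C f = dom\<^sub>C f' \<Longrightarrow> cod\<^sub>C g = dom\<^sub>C g' \<Longrightarrow> (f' \<cdot> f) \<oplus> (g' \<cdot> g) = (f' \<oplus> g') \<cdot> (f \<oplus> g)"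
  unfolding var_def by (simp add: dual_comp tensor_comp)

lemma lamV_dom [simp]: "dom\<^sub>C (lamV C A) = \<^bold>f \<oplus>\<^sub>o A"
  and lamV_cod [simp]: "cod\<^sub>C (lamV C A) = A"
  and lamV_iso [simp]: "iso\<^sub>C (lamV C A)"
  and rhoV_dom [simp]: "dom\<^sub>C (rhoV C A) = A \<oplus>\<^sub>o \<^bold>f"
  and rhoV_cod [simp]: "cod\<^sub>C (rhoV C A) = A"
  and rhoV_iso [simp]: "iso\<^sub>C (rhoV C A)"
  unfolding lamV_def rhoV_def by simp_all

lemma lamV_natural:
  assumes g: "dom\<^sub>C g = A" "cod\<^sub>C g = B"
  shows "lamV C B \<cdot> (id\<^sub>C \<^bold>f \<oplus> g) = g \<cdot> lamV C A"
proof -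
  define R where "R X = rho (X\<^sup>\<bottom>\<^sub>o) \<cdot> (id\<^sub>C (X\<^sup>\<bottom>\<^sub>o) \<otimes> eps \<^bold>t)" for X
  have R [simp]: "dom\<^sub>C (R X) = X\<^sup>\<bottom>\<^sub>o \<otimes>\<^sub>o \<^bold>f\<^sup>\<bottom>\<^sub>o" "cod\<^sub>C (R X) = X\<^sup>\<bottom>\<^sub>o" "iso\<^sub>C (R X)" for X
    unfolding R_def by simp_all
  have interchange: "(id\<^sub>C (A\<^sup>\<bottom>\<^sub>o) \<otimes> eps \<^bold>t) \<cdot> (g\<^sup>\<bottom> \<otimes> id\<^sub>C (\<^bold>f\<^sup>\<bottom>\<^sub>o))
      = (g\<^sup>\<bottom> \<otimes> id\<^sub>C \<^bold>t) \<cdot> (id\<^sub>C (B\<^sup>\<bottom>\<^sub>o) \<otimes> eps \<^bold>t)"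
    using g by (simp flip: tensor_comp)
  have rho: "rho (A\<^sup>\<bottom>\<^sub>o) \<cdot> (g\<^sup>\<bottom> \<otimes> id\<^sub>C \<^bold>t) = g\<^sup>\<bottom> \<cdot> rho (B\<^sup>\<bottom>\<^sub>o)"
    using g by (intro rho_natural) simp_all
  have "R A \<cdot> (g\<^sup>\<bottom> \<otimes> id\<^sub>C (\<^bold>f\<^sup>\<bottom>\<^sub>o)) = g\<^sup>\<bottom> \<cdot> R B"
    unfolding R_def using g by (simp add: interchange comp_reduce[OF rho])
  then have "(R A \<cdot> (g\<^sup>\<bottom> \<otimes> id\<^sub>C (\<^bold>f\<^sup>\<bottom>\<^sub>o)))\<^sup>\<bottom> = (g\<^sup>\<bottom> \<cdot> R B)\<^sup>\<bottom>"
    by simp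
  then have "(g\<^sup>\<bottom> \<otimes> id\<^sub>C (\<^bold>f\<^sup>\<bottom>\<^sub>o))\<^sup>\<bottom> \<cdot> (R A)\<^sup>\<bottom> = (R B)\<^sup>\<bottom> \<cdot> g\<^sup>\<bottom>\<^sup>\<bottom>"
    using g by (simp add: dual_comp)
  then have conj: "inv\<^sub>C ((R B)\<^sup>\<bottom>) \<cdot> (id\<^sub>C \<^bold>f \<oplus> g) = g\<^sup>\<bottom>\<^sup>\<bottom> \<cdot> inv\<^sub>C ((R A)\<^sup>\<bottom>)"
    unfolding var_def by (intro iso_conjugate) (use g in simp_all)
  have lamV: "lamV C X = eps X \<cdot> inv\<^sub>C ((R X)\<^sup>\<bottom>)" for X
    unfolding lamV_def R_def ..
  have "lamV C B \<cdot> (id\<^sub>C \<^bold>f \<oplus> g) = eps B \<cdot> (g\<^sup>\<bottom>\<^sup>\<bottom> \<cdot> inv\<^sub>C ((R A)\<^sup>\<bottom>))"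
    unfolding lamV using g by (simp add: conj)
  also have "\<dots> = g \<cdot> lamV C A"
    unfolding lamV using g by (simp add: comp_reduce[OF eps_natural[OF g, symmetric]])
  finally show ?thesis .
qed

lemma dmt_dom [simp]: "dom\<^sub>C (dmt C P Q) = (P \<otimes>\<^sub>o Q)\<^sup>\<bottom>\<^sub>o"
  and dmt_cod [simp]: "cod\<^sub>C (dmt C P Q) = Q\<^sup>\<bottom>\<^sub>o \<oplus>\<^sub>o P\<^sup>\<bottom>\<^sub>o"
  unfolding dmt_def by simp_all

lemma dual_tensor_natural:
  "dmt C (dom\<^sub>C f) (dom\<^sub>C g) \<cdot> (f \<otimes> g)\<^sup>\<bottom> = (g\<^sup>\<bottom> \<oplus> f\<^sup>\<bottom>) \<cdot> dmt C (cod\<^sub>C f) (cod\<^sub>C g)"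
proof -
  have "dmt C (dom\<^sub>C f) (dom\<^sub>C g) \<cdot> (f \<otimes> g)\<^sup>\<bottom> = ((f \<otimes> g) \<cdot> (eps (dom\<^sub>C f) \<otimes> eps (dom\<^sub>C g)))\<^sup>\<bottom>"
    unfolding dmt_def by (rule dual_comp[symmetric]) simp
  also have "(f \<otimes> g) \<cdot> (eps (dom\<^sub>C f) \<otimes> eps (dom\<^sub>C g)) = (eps (cod\<^sub>C f) \<otimes> eps (cod\<^sub>C g)) \<cdot> (f\<^sup>\<bottom>\<^sup>\<bottom> \<otimes> g\<^sup>\<bottom>\<^sup>\<bottom>)"
    by (simp add: eps_natural flip: tensor_comp)
  also have "((eps (cod\<^sub>C f) \<otimes> eps (cod\<^sub>C g)) \<cdot> (f\<^sup>\<bottom>\<^sup>\<bottom> \<otimes> g\<^sup>\<bottom>\<^sup>\<bottom>))\<^sup>\<bottom> = (g\<^sup>\<bottom> \<oplus> f\<^sup>\<bottom>) \<cdot> dmt C (cod\<^sub>C f) (cod\<^sub>C g)"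
    unfolding dmt_def var_def by (rule dual_comp) simp
  finally show ?thesis .
qed

subsection \<open>Dualization and twists\<close>

definition dualize :: "'m \<Rightarrow> 'm" where
  "dualize h = eps (cod\<^sub>C h) \<cdot> h\<^sup>\<bottom>"

definition undualize :: "'m \<Rightarrow> 'm" where
  "undualize h = eps (cod\<^sub>C h) \<cdot> (inv\<^sub>C (eps (cod\<^sub>C h)) \<cdot> h)\<^sup>\<bottom> \<cdot> inv\<^sub>C (eps (dom\<^sub>C h))"

lemma undualize_dom [simp]: "dom\<^sub>C h = A\<^sup>\<bottom>\<^sub>o \<Longrightarrow> cod\<^sub>C h = A \<Longrightarrow> dom\<^sub>C (undualize h) = A\<^sup>\<bottom>\<^sub>o"
  and undualize_cod [simp]: "dom\<^sub>C h = A\<^sup>\<bottom>\<^sub>o \<Longrightarrow> cod\<^sub>C h = A \<Longrightarrow> cod\<^sub>C (undualize h) = A"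
  unfolding undualize_def by simp_all

lemma dualize_undualize:
  assumes h: "dom\<^sub>C h = A\<^sup>\<bottom>\<^sub>o" "cod\<^sub>C h = A"
  shows "dualize (undualize h) = h"
proof -
  let ?a = "undualize h"
  have "(?a\<^sup>\<bottom>)\<^sup>\<bottom> = inv\<^sub>C (eps A) \<cdot> (?a \<cdot> eps (A\<^sup>\<bottom>\<^sub>o))"
    using eps_natural[of ?a] h by simp
  also have "\<dots> = (inv\<^sub>C (eps A) \<cdot> h)\<^sup>\<bottom>"
    using h unfolding undualize_def by simp
  finally have "?a\<^sup>\<bottom> = inv\<^sub>C (eps A) \<cdot> h"
    by (rule dual_faithful[rotated 2]) (use h in simp_all)
  then show ?thesis
    unfolding dualize_def using h by simp
qed

text \<open>\<open>dual_twist A\<close> is the identity iff \<open>\<epsilon>\<^bsub>A\<^sup>\<bottom>\<^esub>\<close> and \<open>\<epsilon>\<^sub>A\<^sup>\<bottom>\<close> are mutually inverse,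
  which the definition of \<^const>\<open>star_autonomous\<close> does not require.\<close>

definition dual_twist :: "'o \<Rightarrow> 'm" where
  "dual_twist A = eps (A\<^sup>\<bottom>\<^sub>o) \<cdot> (eps A)\<^sup>\<bottom>"

definition twist :: "'o \<Rightarrow> 'm" where
  "twist A = eps A \<cdot> (dual_twist A)\<^sup>\<bottom> \<cdot> inv\<^sub>C (eps A)"

lemma dual_twist_dom [simp]: "dom\<^sub>C (dual_twist A) = A\<^sup>\<bottom>\<^sub>o"
  and dual_twist_cod [simp]: "cod\<^sub>C (dual_twist A) = A\<^sup>\<bottom>\<^sub>o"
  and dual_twist_iso [simp]: "iso\<^sub>C (dual_twist A)"
  and twist_dom [simp]: "dom\<^sub>C (twist A) = A"
  and twist_cod [simp]: "cod\<^sub>C (twist A) = A"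
  and twist_iso [simp]: "iso\<^sub>C (twist A)"
  unfolding twist_def dual_twist_def by simp_all

lemma dual_dual_eps: "(eps A)\<^sup>\<bottom>\<^sup>\<bottom> = eps (A\<^sup>\<bottom>\<^sub>o\<^sup>\<bottom>\<^sub>o)"
proof (rule iso_cancel_left[OF eps_iso])
  show "eps A \<cdot> (eps A)\<^sup>\<bottom>\<^sup>\<bottom> = eps A \<cdot> eps (A\<^sup>\<bottom>\<^sub>o\<^sup>\<bottom>\<^sub>o)"
    using eps_natural[of "eps A"] by simp
qed simp_all

lemma dual_twist_natural:
  assumes "dom\<^sub>C g = A" "cod\<^sub>C g = B"
  shows "dual_twist A \<cdot> g\<^sup>\<bottom> = g\<^sup>\<bottom> \<cdot> dual_twist B"
proof -
  have "(g \<cdot> eps A)\<^sup>\<bottom> = (eps B \<cdot> g\<^sup>\<bottom>\<^sup>\<bottom>)\<^sup>\<bottom>"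
    using eps_natural[OF assms] by simp
  then have inner: "(eps A)\<^sup>\<bottom> \<cdot> g\<^sup>\<bottom> = g\<^sup>\<bottom>\<^sup>\<bottom>\<^sup>\<bottom> \<cdot> (eps B)\<^sup>\<bottom>"
    using assms by (simp add: dual_comp)
  have outer: "eps (A\<^sup>\<bottom>\<^sub>o) \<cdot> g\<^sup>\<bottom>\<^sup>\<bottom>\<^sup>\<bottom> = g\<^sup>\<bottom> \<cdot> eps (B\<^sup>\<bottom>\<^sub>o)"
    using eps_natural[of "g\<^sup>\<bottom>"] assms by simp
  show ?thesis
    unfolding dual_twist_def using assms by (simp add: inner comp_reduce[OF outer])
qed

lemma dual_dual_twist: "(dual_twist A)\<^sup>\<bottom> = dual_twist (A\<^sup>\<bottom>\<^sub>o)"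
  unfolding dual_twist_def by (simp add: dual_comp dual_dual_eps)

lemma dual_twist_eq: "(twist A)\<^sup>\<bottom> = dual_twist A"
proof (rule dual_faithful)
  have "(twist A)\<^sup>\<bottom>\<^sup>\<bottom> = inv\<^sub>C (eps A) \<cdot> (twist A \<cdot> eps A)"
    using eps_natural[of "twist A"] by simp
  also have "\<dots> = (dual_twist A)\<^sup>\<bottom>"
    unfolding twist_def by simp
  finally show "(twist A)\<^sup>\<bottom>\<^sup>\<bottom> = (dual_twist A)\<^sup>\<bottom>" .
qed simp_all

lemma twist_eps: "twist A \<cdot> eps A = eps A \<cdot> (dual_twist A)\<^sup>\<bottom>"
  unfolding twist_def by simp

lemma twist_commute:
  assumes h: "dom\<^sub>C h = B\<^sup>\<bottom>\<^sub>o" "cod\<^sub>C h = A"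
  shows "twist A \<cdot> h = h \<cdot> dual_twist B"
proof (rule dual_faithful)
  have "(twist A \<cdot> h)\<^sup>\<bottom> = h\<^sup>\<bottom> \<cdot> dual_twist A"
    using h by (simp add: dual_comp dual_twist_eq)
  also have "\<dots> = dual_twist (B\<^sup>\<bottom>\<^sub>o) \<cdot> h\<^sup>\<bottom>"
    using dual_twist_natural[OF h] by simp
  also have "\<dots> = (h \<cdot> dual_twist B)\<^sup>\<bottom>"
    using h by (simp add: dual_comp dual_dual_twist)
  finally show "(twist A \<cdot> h)\<^sup>\<bottom> = (h \<cdot> dual_twist B)\<^sup>\<bottom>" .
qed (use h in simp_all)

subsection \<open>Duals of the unit isomorphisms\<close>

lemma rho_eps_tensor_eps:
  "rho A \<cdot> (eps A \<otimes> eps \<^bold>t) = eps A \<cdot> (rho (A\<^sup>\<bottom>\<^sub>o\<^sup>\<bottom>\<^sub>o) \<cdot> (id\<^sub>C (A\<^sup>\<bottom>\<^sub>o\<^sup>\<bottom>\<^sub>o) \<otimes> eps \<^bold>t))"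
proof -
  have "eps A \<otimes> eps \<^bold>t = (eps A \<otimes> id\<^sub>C \<^bold>t) \<cdot> (id\<^sub>C (A\<^sup>\<bottom>\<^sub>o\<^sup>\<bottom>\<^sub>o) \<otimes> eps \<^bold>t)"
    by (simp flip: tensor_comp)
  then show ?thesis
    by (simp add: comp_reduce[OF rho_natural])
qed

lemma dual_inv_lamV:
  "twist A \<cdot> (eps A \<cdot> (inv\<^sub>C (lamV C (A\<^sup>\<bottom>\<^sub>o)))\<^sup>\<bottom>)
    = rho A \<cdot> ((eps A \<otimes> eps \<^bold>t) \<cdot> eps (A\<^sup>\<bottom>\<^sub>o\<^sup>\<bottom>\<^sub>o \<otimes>\<^sub>o \<^bold>f\<^sup>\<bottom>\<^sub>o))"
proof -
  define R where "R = rho (A\<^sup>\<bottom>\<^sub>o\<^sup>\<bottom>\<^sub>o) \<cdot> (id\<^sub>C (A\<^sup>\<bottom>\<^sub>o\<^sup>\<bottom>\<^sub>o) \<otimes> eps \<^bold>t)"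
  have R [simp]: "dom\<^sub>C R = A\<^sup>\<bottom>\<^sub>o\<^sup>\<bottom>\<^sub>o \<otimes>\<^sub>o \<^bold>f\<^sup>\<bottom>\<^sub>o" "cod\<^sub>C R = A\<^sup>\<bottom>\<^sub>o\<^sup>\<bottom>\<^sub>o" "iso\<^sub>C R"
    unfolding R_def by simp_all
  have lamV: "lamV C (A\<^sup>\<bottom>\<^sub>o) = eps (A\<^sup>\<bottom>\<^sub>o) \<cdot> inv\<^sub>C (R\<^sup>\<bottom>)"
    unfolding lamV_def R_def ..
  have unit: "rho A \<cdot> (eps A \<otimes> eps \<^bold>t) = eps A \<cdot> R"
    unfolding R_def by (rule rho_eps_tensor_eps)
  have conj: "inv\<^sub>C R \<cdot> eps (A\<^sup>\<bottom>\<^sub>o\<^sup>\<bottom>\<^sub>o) = eps (A\<^sup>\<bottom>\<^sub>o\<^sup>\<bottom>\<^sub>o \<otimes>\<^sub>o \<^bold>f\<^sup>\<bottom>\<^sub>o) \<cdot> (inv\<^sub>C R)\<^sup>\<bottom>\<^sup>\<bottom>"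
    by (rule eps_natural) simp_all
  have "rho A \<cdot> ((eps A \<otimes> eps \<^bold>t) \<cdot> (eps (A\<^sup>\<bottom>\<^sub>o\<^sup>\<bottom>\<^sub>o \<otimes>\<^sub>o \<^bold>f\<^sup>\<bottom>\<^sub>o) \<cdot> (lamV C (A\<^sup>\<bottom>\<^sub>o))\<^sup>\<bottom>))
      = eps A \<cdot> (R \<cdot> (inv\<^sub>C R \<cdot> (eps (A\<^sup>\<bottom>\<^sub>o\<^sup>\<bottom>\<^sub>o) \<cdot> (eps (A\<^sup>\<bottom>\<^sub>o))\<^sup>\<bottom>)))"
    unfolding lamV by (simp add: dual_comp inv_dual comp_reduce[OF unit] comp_reduce[OF conj[symmetric]])
  also have "\<dots> = twist A \<cdot> eps A"
    unfolding twist_eps dual_dual_twist by (simp add: dual_twist_def)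
  finally have twisted: "rho A \<cdot> ((eps A \<otimes> eps \<^bold>t) \<cdot> (eps (A\<^sup>\<bottom>\<^sub>o\<^sup>\<bottom>\<^sub>o \<otimes>\<^sub>o \<^bold>f\<^sup>\<bottom>\<^sub>o) \<cdot> (lamV C (A\<^sup>\<bottom>\<^sub>o))\<^sup>\<bottom>))
      = twist A \<cdot> eps A" .
  have cancel: "(lamV C (A\<^sup>\<bottom>\<^sub>o))\<^sup>\<bottom> \<cdot> (inv\<^sub>C (lamV C (A\<^sup>\<bottom>\<^sub>o)))\<^sup>\<bottom> = id\<^sub>C ((A\<^sup>\<bottom>\<^sub>o\<^sup>\<bottom>\<^sub>o \<otimes>\<^sub>o \<^bold>f\<^sup>\<bottom>\<^sub>o)\<^sup>\<bottom>\<^sub>o\<^sup>\<bottom>\<^sub>o)"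
    by (simp flip: dual_comp)
  have "twist A \<cdot> (eps A \<cdot> (inv\<^sub>C (lamV C (A\<^sup>\<bottom>\<^sub>o)))\<^sup>\<bottom>) = (twist A \<cdot> eps A) \<cdot> (inv\<^sub>C (lamV C (A\<^sup>\<bottom>\<^sub>o)))\<^sup>\<bottom>"
    by simp
  also have "\<dots> = rho A \<cdot> ((eps A \<otimes> eps \<^bold>t) \<cdot> eps (A\<^sup>\<bottom>\<^sub>o\<^sup>\<bottom>\<^sub>o \<otimes>\<^sub>o \<^bold>f\<^sup>\<bottom>\<^sub>o))"
    by (simp add: cancel flip: twisted)
  finally show ?thesis .
qed

lemma dual_inv_lam:
  "rhoV C A \<cdot> ((eps A \<oplus> id\<^sub>C \<^bold>f) \<cdot> dmt C \<^bold>t (A\<^sup>\<bottom>\<^sub>o)) = twist A \<cdot> (eps A \<cdot> (inv\<^sub>C (lam (A\<^sup>\<bottom>\<^sub>o)))\<^sup>\<bottom>)"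
proof -
  define L where "L = lam (A\<^sup>\<bottom>\<^sub>o) \<cdot> (eps \<^bold>t \<otimes> id\<^sub>C (A\<^sup>\<bottom>\<^sub>o))"
  have L [simp]: "dom\<^sub>C L = \<^bold>f\<^sup>\<bottom>\<^sub>o \<otimes>\<^sub>o A\<^sup>\<bottom>\<^sub>o" "cod\<^sub>C L = A\<^sup>\<bottom>\<^sub>o" "iso\<^sub>C L"
    unfolding L_def by simp_all
  have "(eps A \<oplus> id\<^sub>C \<^bold>f) \<cdot> dmt C \<^bold>t (A\<^sup>\<bottom>\<^sub>o) = ((eps \<^bold>t \<otimes> eps (A\<^sup>\<bottom>\<^sub>o)) \<cdot> (id\<^sub>C (\<^bold>f\<^sup>\<bottom>\<^sub>o) \<otimes> (eps A)\<^sup>\<bottom>))\<^sup>\<bottom>"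
    unfolding var_def dmt_def by (simp add: dual_comp)
  also have "\<dots> = (eps \<^bold>t \<otimes> dual_twist A)\<^sup>\<bottom>"
    unfolding dual_twist_def by (simp flip: tensor_comp)
  finally have par: "(eps A \<oplus> id\<^sub>C \<^bold>f) \<cdot> dmt C \<^bold>t (A\<^sup>\<bottom>\<^sub>o) = (eps \<^bold>t \<otimes> dual_twist A)\<^sup>\<bottom>" .
  have unit: "(eps \<^bold>t \<otimes> dual_twist A) \<cdot> (inv\<^sub>C (eps \<^bold>t) \<otimes> id\<^sub>C (A\<^sup>\<bottom>\<^sub>o)) = id\<^sub>C \<^bold>t \<otimes> dual_twist A"
    by (simp flip: tensor_comp)
  have "inv\<^sub>C L = (inv\<^sub>C (eps \<^bold>t) \<otimes> id\<^sub>C (A\<^sup>\<bottom>\<^sub>o)) \<cdot> inv\<^sub>C (lam (A\<^sup>\<bottom>\<^sub>o))"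
    unfolding L_def by (simp add: inv_comp inv_tensor)
  then have "(eps \<^bold>t \<otimes> dual_twist A) \<cdot> inv\<^sub>C L = inv\<^sub>C (lam (A\<^sup>\<bottom>\<^sub>o)) \<cdot> dual_twist A"
    by (simp add: comp_reduce[OF unit] inv_lam_natural)
  then have "rhoV C A \<cdot> (eps \<^bold>t \<otimes> dual_twist A)\<^sup>\<bottom> = eps A \<cdot> ((dual_twist A)\<^sup>\<bottom> \<cdot> (inv\<^sub>C (lam (A\<^sup>\<bottom>\<^sub>o)))\<^sup>\<bottom>)"
    unfolding rhoV_def L_def[symmetric] by (simp add: inv_dual flip: dual_comp)
  then show ?thesis
    by (simp add: par comp_reduce[OF twist_eps[symmetric]])
qed

lemma dual_inv_rho:
  "lamV C A \<cdot> ((id\<^sub>C \<^bold>f \<oplus> eps A) \<cdot> dmt C (A\<^sup>\<bottom>\<^sub>o) \<^bold>t) = twist A \<cdot> (eps A \<cdot> (inv\<^sub>C (rho (A\<^sup>\<bottom>\<^sub>o)))\<^sup>\<bottom>)"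
proof -
  define R where "R = rho (A\<^sup>\<bottom>\<^sub>o) \<cdot> (id\<^sub>C (A\<^sup>\<bottom>\<^sub>o) \<otimes> eps \<^bold>t)"
  have R [simp]: "dom\<^sub>C R = A\<^sup>\<bottom>\<^sub>o \<otimes>\<^sub>o \<^bold>f\<^sup>\<bottom>\<^sub>o" "cod\<^sub>C R = A\<^sup>\<bottom>\<^sub>o" "iso\<^sub>C R"
    unfolding R_def by simp_all
  have "(id\<^sub>C \<^bold>f \<oplus> eps A) \<cdot> dmt C (A\<^sup>\<bottom>\<^sub>o) \<^bold>t = ((eps (A\<^sup>\<bottom>\<^sub>o) \<otimes> eps \<^bold>t) \<cdot> ((eps A)\<^sup>\<bottom> \<otimes> id\<^sub>C (\<^bold>f\<^sup>\<bottom>\<^sub>o)))\<^sup>\<bottom>"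
    unfolding var_def dmt_def by (simp add: dual_comp)
  also have "\<dots> = (dual_twist A \<otimes> eps \<^bold>t)\<^sup>\<bottom>"
    unfolding dual_twist_def by (simp flip: tensor_comp)
  finally have par: "(id\<^sub>C \<^bold>f \<oplus> eps A) \<cdot> dmt C (A\<^sup>\<bottom>\<^sub>o) \<^bold>t = (dual_twist A \<otimes> eps \<^bold>t)\<^sup>\<bottom>" .
  have unit: "(dual_twist A \<otimes> eps \<^bold>t) \<cdot> (id\<^sub>C (A\<^sup>\<bottom>\<^sub>o) \<otimes> inv\<^sub>C (eps \<^bold>t)) = dual_twist A \<otimes> id\<^sub>C \<^bold>t"
    by (simp flip: tensor_comp)
  have "inv\<^sub>C R = (id\<^sub>C (A\<^sup>\<bottom>\<^sub>o) \<otimes> inv\<^sub>C (eps \<^bold>t)) \<cdot> inv\<^sub>C (rho (A\<^sup>\<bottom>\<^sub>o))"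
    unfolding R_def by (simp add: inv_comp inv_tensor)
  then have "(dual_twist A \<otimes> eps \<^bold>t) \<cdot> inv\<^sub>C R = inv\<^sub>C (rho (A\<^sup>\<bottom>\<^sub>o)) \<cdot> dual_twist A"
    by (simp add: comp_reduce[OF unit] inv_rho_natural)
  then have "lamV C A \<cdot> (dual_twist A \<otimes> eps \<^bold>t)\<^sup>\<bottom> = eps A \<cdot> ((dual_twist A)\<^sup>\<bottom> \<cdot> (inv\<^sub>C (rho (A\<^sup>\<bottom>\<^sub>o)))\<^sup>\<bottom>)"
    unfolding lamV_def R_def[symmetric] by (simp add: inv_dual flip: dual_comp)
  then show ?thesis
    by (simp add: par comp_reduce[OF twist_eps[symmetric]])
qed

lemma dual_rhoV:
  "(eps \<^bold>t \<otimes> id\<^sub>C (A\<^sup>\<bottom>\<^sub>o)) \<cdot> (eps (\<^bold>f\<^sup>\<bottom>\<^sub>o \<otimes>\<^sub>o A\<^sup>\<bottom>\<^sub>o) \<cdot> (rhoV C A)\<^sup>\<bottom>) = inv\<^sub>C (lam (A\<^sup>\<bottom>\<^sub>o)) \<cdot> dual_twist A"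
proof -
  define L where "L = lam (A\<^sup>\<bottom>\<^sub>o) \<cdot> (eps \<^bold>t \<otimes> id\<^sub>C (A\<^sup>\<bottom>\<^sub>o))"
  have L [simp]: "dom\<^sub>C L = \<^bold>f\<^sup>\<bottom>\<^sub>o \<otimes>\<^sub>o A\<^sup>\<bottom>\<^sub>o" "cod\<^sub>C L = A\<^sup>\<bottom>\<^sub>o" "iso\<^sub>C L"
    unfolding L_def by simp_all
  have dual: "(rhoV C A)\<^sup>\<bottom> = (inv\<^sub>C L)\<^sup>\<bottom>\<^sup>\<bottom> \<cdot> (eps A)\<^sup>\<bottom>"
    unfolding rhoV_def L_def[symmetric] by (simp add: dual_comp inv_dual)
  have nat: "eps (\<^bold>f\<^sup>\<bottom>\<^sub>o \<otimes>\<^sub>o A\<^sup>\<bottom>\<^sub>o) \<cdot> (inv\<^sub>C L)\<^sup>\<bottom>\<^sup>\<bottom> = inv\<^sub>C L \<cdot> eps (A\<^sup>\<bottom>\<^sub>o)"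
    by (rule eps_natural[symmetric]) simp_all
  have unit: "(eps \<^bold>t \<otimes> id\<^sub>C (A\<^sup>\<bottom>\<^sub>o)) \<cdot> (inv\<^sub>C (eps \<^bold>t) \<otimes> id\<^sub>C (A\<^sup>\<bottom>\<^sub>o)) = id\<^sub>C (\<^bold>t \<otimes>\<^sub>o A\<^sup>\<bottom>\<^sub>o)"
    by (simp flip: tensor_comp)
  have "inv\<^sub>C L = (inv\<^sub>C (eps \<^bold>t) \<otimes> id\<^sub>C (A\<^sup>\<bottom>\<^sub>o)) \<cdot> inv\<^sub>C (lam (A\<^sup>\<bottom>\<^sub>o))"
    unfolding L_def by (simp add: inv_comp inv_tensor)
  then have inv: "(eps \<^bold>t \<otimes> id\<^sub>C (A\<^sup>\<bottom>\<^sub>o)) \<cdot> inv\<^sub>C L = inv\<^sub>C (lam (A\<^sup>\<bottom>\<^sub>o))"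
    by (simp add: comp_reduce[OF unit])
  show ?thesis
    by (simp add: dual comp_reduce[OF nat] comp_reduce[OF inv] dual_twist_def)
qed

lemma dual_lamV:
  "(id\<^sub>C (A\<^sup>\<bottom>\<^sub>o) \<otimes> eps \<^bold>t) \<cdot> (eps (A\<^sup>\<bottom>\<^sub>o \<otimes>\<^sub>o \<^bold>f\<^sup>\<bottom>\<^sub>o) \<cdot> (lamV C A)\<^sup>\<bottom>) = inv\<^sub>C (rho (A\<^sup>\<bottom>\<^sub>o)) \<cdot> dual_twist A"
proof -
  define R where "R = rho (A\<^sup>\<bottom>\<^sub>o) \<cdot> (id\<^sub>C (A\<^sup>\<bottom>\<^sub>o) \<otimes> eps \<^bold>t)"
  have R [simp]: "dom\<^sub>C R = A\<^sup>\<bottom>\<^sub>o \<otimes>\<^sub>o \<^bold>f\<^sup>\<bottom>\<^sub>o" "cod\<^sub>C R = A\<^sup>\<bottom>\<^sub>o" "iso\<^sub>C R"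
    unfolding R_def by simp_all
  have dual: "(lamV C A)\<^sup>\<bottom> = (inv\<^sub>C R)\<^sup>\<bottom>\<^sup>\<bottom> \<cdot> (eps A)\<^sup>\<bottom>"
    unfolding lamV_def R_def[symmetric] by (simp add: dual_comp inv_dual)
  have nat: "eps (A\<^sup>\<bottom>\<^sub>o \<otimes>\<^sub>o \<^bold>f\<^sup>\<bottom>\<^sub>o) \<cdot> (inv\<^sub>C R)\<^sup>\<bottom>\<^sup>\<bottom> = inv\<^sub>C R \<cdot> eps (A\<^sup>\<bottom>\<^sub>o)"
    by (rule eps_natural[symmetric]) simp_all
  have unit: "(id\<^sub>C (A\<^sup>\<bottom>\<^sub>o) \<otimes> eps \<^bold>t) \<cdot> (id\<^sub>C (A\<^sup>\<bottom>\<^sub>o) \<otimes> inv\<^sub>C (eps \<^bold>t)) = id\<^sub>C (A\<^sup>\<bottom>\<^sub>o \<otimes>\<^sub>o \<^bold>t)"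
    by (simp flip: tensor_comp)
  have "inv\<^sub>C R = (id\<^sub>C (A\<^sup>\<bottom>\<^sub>o) \<otimes> inv\<^sub>C (eps \<^bold>t)) \<cdot> inv\<^sub>C (rho (A\<^sup>\<bottom>\<^sub>o))"
    unfolding R_def by (simp add: inv_comp inv_tensor)
  then have inv: "(id\<^sub>C (A\<^sup>\<bottom>\<^sub>o) \<otimes> eps \<^bold>t) \<cdot> inv\<^sub>C R = inv\<^sub>C (rho (A\<^sup>\<bottom>\<^sub>o))"
    by (simp add: comp_reduce[OF unit])
  show ?thesis
    by (simp add: dual comp_reduce[OF nat] comp_reduce[OF inv] dual_twist_def)
qed

lemma dual_rho:
  "dmt C A \<^bold>t \<cdot> (rho A)\<^sup>\<bottom> = inv\<^sub>C (lamV C (A\<^sup>\<bottom>\<^sub>o)) \<cdot> dual_twist A"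
proof (rule eq_inv_comp)
  define R where "R = rho (A\<^sup>\<bottom>\<^sub>o\<^sup>\<bottom>\<^sub>o) \<cdot> (id\<^sub>C (A\<^sup>\<bottom>\<^sub>o\<^sup>\<bottom>\<^sub>o) \<otimes> eps \<^bold>t)"
  have R [simp]: "dom\<^sub>C R = A\<^sup>\<bottom>\<^sub>o\<^sup>\<bottom>\<^sub>o \<otimes>\<^sub>o \<^bold>f\<^sup>\<bottom>\<^sub>o" "cod\<^sub>C R = A\<^sup>\<bottom>\<^sub>o\<^sup>\<bottom>\<^sub>o" "iso\<^sub>C R"
    unfolding R_def by simp_all
  have "dmt C A \<^bold>t \<cdot> (rho A)\<^sup>\<bottom> = (rho A \<cdot> (eps A \<otimes> eps \<^bold>t))\<^sup>\<bottom>"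
    unfolding dmt_def by (rule dual_comp[symmetric]) simp
  also have "\<dots> = R\<^sup>\<bottom> \<cdot> (eps A)\<^sup>\<bottom>"
    unfolding rho_eps_tensor_eps R_def[symmetric] by (simp add: dual_comp)
  finally show "lamV C (A\<^sup>\<bottom>\<^sub>o) \<cdot> (dmt C A \<^bold>t \<cdot> (rho A)\<^sup>\<bottom>) = dual_twist A"
    unfolding lamV_def R_def[symmetric] dual_twist_def by simp
qed simp_all

end

locale b2_category = star_autonomous_category C for C :: "('o, 'm, 'z) sacat_scheme" +
  fixes F :: "'o \<Rightarrow> 'b::boolean_algebra"
  assumes B2: "B2 C F"
begin

abbreviation "Delta A \<equiv> cdelta C A"
abbreviation "Pi A \<equiv> cpi C A"

lemma B1: "B1 C F"
  using B2 unfolding B2_def by blast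

lemma Delta_dom [simp]: "dom\<^sub>C (Delta A) = A"
  and Delta_cod [simp]: "cod\<^sub>C (Delta A) = A \<otimes>\<^sub>o A"
  and Pi_dom [simp]: "dom\<^sub>C (Pi A) = A"
  and Pi_cod [simp]: "cod\<^sub>C (Pi A) = \<^bold>t"
  using B1 unfolding B1_def hom_def by simp_all

lemma counit_left: "lam A \<cdot> ((Pi A \<otimes> id\<^sub>C A) \<cdot> Delta A) = id\<^sub>C A"
  and counit_right: "rho A \<cdot> ((id\<^sub>C A \<otimes> Pi A) \<cdot> Delta A) = id\<^sub>C A"
  using B1 unfolding B1_def by simp_all

lemma Pi_unit: "Pi \<^bold>t = id\<^sub>C \<^bold>t"
  using B2 unfolding B2_def by blast

lemma Delta_unit_rho: "Delta \<^bold>t = inv\<^sub>C (rho \<^bold>t)"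
  by (rule inv_eqI) (use counit_right[of "\<^bold>t"] in \<open>simp_all add: Pi_unit\<close>)

lemma Delta_unit_lam: "Delta \<^bold>t = inv\<^sub>C (lam \<^bold>t)"
  by (rule inv_eqI) (use counit_left[of "\<^bold>t"] in \<open>simp_all add: Pi_unit\<close>)

lemma rho_unit_eq_lam_unit: "rho \<^bold>t = lam \<^bold>t"
proof -
  have "inv\<^sub>C (inv\<^sub>C (rho \<^bold>t)) = inv\<^sub>C (inv\<^sub>C (lam \<^bold>t))"
    by (simp only: Delta_unit_rho [symmetric] Delta_unit_lam [symmetric])
  then show ?thesis by simp
qed

lemma rho_unit_tensor:
  assumes "dom\<^sub>C f = \<^bold>t" "cod\<^sub>C f = \<^bold>t" "dom\<^sub>C g = \<^bold>t" "cod\<^sub>C g = \<^bold>t"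
  shows "rho \<^bold>t \<cdot> (f \<otimes> g) = f \<cdot> (g \<cdot> rho \<^bold>t)"
proof -
  have split: "f \<otimes> g = (f \<otimes> id\<^sub>C \<^bold>t) \<cdot> (id\<^sub>C \<^bold>t \<otimes> g)"
    using assms by (simp flip: tensor_comp)
  have "rho \<^bold>t \<cdot> (id\<^sub>C \<^bold>t \<otimes> g) = g \<cdot> rho \<^bold>t"
    using lam_natural[OF assms(3,4)] by (simp add: rho_unit_eq_lam_unit)
  then show ?thesis
    using assms by (simp add: split comp_reduce[OF rho_natural[OF assms(1,2)]])
qed

lemma dual_twist_par_commute:
  "(dual_twist \<^bold>t \<oplus> dual_twist \<^bold>t) \<cdot> (dmt C \<^bold>t \<^bold>t \<cdot> (rho \<^bold>t)\<^sup>\<bottom>)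
    = dmt C \<^bold>t \<^bold>t \<cdot> ((rho \<^bold>t)\<^sup>\<bottom> \<cdot> (dual_twist \<^bold>t \<cdot> dual_twist \<^bold>t))"
proof -
  have "(eps \<^bold>t \<otimes> eps \<^bold>t) \<cdot> ((dual_twist \<^bold>t)\<^sup>\<bottom> \<otimes> (dual_twist \<^bold>t)\<^sup>\<bottom>) = (twist \<^bold>t \<otimes> twist \<^bold>t) \<cdot> (eps \<^bold>t \<otimes> eps \<^bold>t)"
    by (simp add: twist_eps flip: tensor_comp)
  then have "rho \<^bold>t \<cdot> ((eps \<^bold>t \<otimes> eps \<^bold>t) \<cdot> ((dual_twist \<^bold>t)\<^sup>\<bottom> \<otimes> (dual_twist \<^bold>t)\<^sup>\<bottom>))
      = twist \<^bold>t \<cdot> (twist \<^bold>t \<cdot> (rho \<^bold>t \<cdot> (eps \<^bold>t \<otimes> eps \<^bold>t)))"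
    by (simp add: comp_reduce[OF rho_unit_tensor])
  then have "(rho \<^bold>t \<cdot> ((eps \<^bold>t \<otimes> eps \<^bold>t) \<cdot> ((dual_twist \<^bold>t)\<^sup>\<bottom> \<otimes> (dual_twist \<^bold>t)\<^sup>\<bottom>)))\<^sup>\<bottom>
      = (twist \<^bold>t \<cdot> (twist \<^bold>t \<cdot> (rho \<^bold>t \<cdot> (eps \<^bold>t \<otimes> eps \<^bold>t))))\<^sup>\<bottom>"
    by simp
  then show ?thesis
    unfolding var_def dmt_def by (simp add: dual_comp dual_twist_eq)
qed

end

locale b3_category = b2_category +
  assumes B3: "B3 C F"
begin

abbreviation "med A B D E \<equiv> cmed C A B D E"
abbreviation "nm \<equiv> cnm C"

lemma med_dom [simp]: "dom\<^sub>C (med A B D E) = (A \<otimes>\<^sub>o B) \<oplus>\<^sub>o (D \<otimes>\<^sub>o E)"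
  and med_cod [simp]: "cod\<^sub>C (med A B D E) = (A \<oplus>\<^sub>o D) \<otimes>\<^sub>o (B \<oplus>\<^sub>o E)"
  using B3 unfolding B3_def hom_def vob_def by simp_all

lemma med_natural:
  assumes "dom\<^sub>C f1 = A" "dom\<^sub>C f2 = B" "dom\<^sub>C f3 = D" "dom\<^sub>C f4 = E"
    and "cod\<^sub>C f1 = A'" "cod\<^sub>C f2 = B'" "cod\<^sub>C f3 = D'" "cod\<^sub>C f4 = E'"
  shows "med A' B' D' E' \<cdot> ((f1 \<otimes> f2) \<oplus> (f3 \<otimes> f4)) = ((f1 \<oplus> f3) \<otimes> (f2 \<oplus> f4)) \<cdot> med A B D E"
proof -
  have "\<forall>f1 f2 f3 f4 A B D E A' B' D' E'.
          f1 \<in> hom C A A' \<longrightarrow> f2 \<in> hom C B B' \<longrightarrow> f3 \<in> hom C D D' \<longrightarrow> f4 \<in> hom C E E' \<longrightarrow>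
          med A' B' D' E' \<cdot> ((f1 \<otimes> f2) \<oplus> (f3 \<otimes> f4)) = ((f1 \<oplus> f3) \<otimes> (f2 \<oplus> f4)) \<cdot> med A B D E"
    using B3 unfolding B3_def by (elim conjE) assumption
  from this[rule_format, of f1 A A' f2 B B' f3 D D' f4 E E'] show ?thesis
    using assms by (simp add: hom_def)
qed

lemma medial_selfdual: "medial_selfdual C"
  using B3 unfolding B3_def by blast

lemma Delta_par: "Delta (A \<oplus>\<^sub>o B) = med A A B B \<cdot> (Delta A \<oplus> Delta B)"
proof -
  have "\<forall>A B. Delta (A \<oplus>\<^sub>o B) = med A A B B \<cdot> (Delta A \<oplus> Delta B)"
    using B3 unfolding B3_def vob_def by (elim conjE) assumption
  then show ?thesis by blast
qed

lemma nm_dom [simp]: "dom\<^sub>C nm = \<^bold>t \<oplus>\<^sub>o \<^bold>t"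
  and nm_cod [simp]: "cod\<^sub>C nm = \<^bold>t"
proof -
  have "nm \<in> hom C (\<^bold>t \<oplus>\<^sub>o \<^bold>t) \<^bold>t"
    using B3 unfolding B3_def vob_def by (elim conjE) assumption
  then show "dom\<^sub>C nm = \<^bold>t \<oplus>\<^sub>o \<^bold>t" "cod\<^sub>C nm = \<^bold>t"
    by (simp_all add: hom_def)
qed

lemma Pi_par_unit: "Pi (\<^bold>t \<oplus>\<^sub>o \<^bold>t) = nm"
  using B3 unfolding B3_def vob_def by (elim conjE) assumption

lemma nm_eq_nabla: "nm = eps \<^bold>t \<cdot> (Delta \<^bold>f)\<^sup>\<bottom>"
proof -
  have "nm = cnabla C \<^bold>t"
    using B3 unfolding B3_def by (elim conjE) assumption
  then show ?thesis
    unfolding cnabla_def by simp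
qed

definition pi_dual where
  "pi_dual = undualize (Pi \<^bold>f)"

lemma pi_dual_dom [simp]: "dom\<^sub>C pi_dual = \<^bold>f"
  and pi_dual_cod [simp]: "cod\<^sub>C pi_dual = \<^bold>t"
  unfolding pi_dual_def by simp_all

lemma dualize_pi_dual: "dualize pi_dual = Pi \<^bold>f"
  unfolding pi_dual_def by (rule dualize_undualize) simp_all

lemma nm_left_unit: "nm \<cdot> (pi_dual \<oplus> id\<^sub>C \<^bold>t) = lamV C \<^bold>t"
proof -
  define R where "R = rho \<^bold>f \<cdot> (id\<^sub>C \<^bold>f \<otimes> eps \<^bold>t)"
  have R [simp]: "dom\<^sub>C R = \<^bold>f \<otimes>\<^sub>o \<^bold>f\<^sup>\<bottom>\<^sub>o" "cod\<^sub>C R = \<^bold>f" "iso\<^sub>C R"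
    unfolding R_def by simp_all
  have "R \<cdot> ((id\<^sub>C \<^bold>f \<otimes> pi_dual\<^sup>\<bottom>) \<cdot> Delta \<^bold>f) = id\<^sub>C \<^bold>f"
    unfolding R_def using counit_right[of "\<^bold>f"]
    by (simp add: comp_reduce[of "id\<^sub>C \<^bold>f \<otimes> eps \<^bold>t"] dualize_pi_dual[unfolded dualize_def pi_dual_cod] flip: tensor_comp)
  then have inv: "(id\<^sub>C \<^bold>f \<otimes> pi_dual\<^sup>\<bottom>) \<cdot> Delta \<^bold>f = inv\<^sub>C R"
    by (intro inv_eqI) simp_all
  have "lamV C \<^bold>t = eps \<^bold>t \<cdot> inv\<^sub>C (R\<^sup>\<bottom>)"
    unfolding lamV_def R_def ..
  also have "\<dots> = eps \<^bold>t \<cdot> (Delta \<^bold>f)\<^sup>\<bottom> \<cdot> (id\<^sub>C \<^bold>f \<otimes> pi_dual\<^sup>\<bottom>)\<^sup>\<bottom>"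
    by (simp add: inv_dual dual_comp flip: inv)
  also have "\<dots> = nm \<cdot> (pi_dual \<oplus> id\<^sub>C \<^bold>t)"
    unfolding nm_eq_nabla var_def by simp
  finally show ?thesis ..
qed

lemma nm_right_unit: "nm \<cdot> (id\<^sub>C \<^bold>t \<oplus> pi_dual) = rhoV C \<^bold>t"
proof -
  define L where "L = lam \<^bold>f \<cdot> (eps \<^bold>t \<otimes> id\<^sub>C \<^bold>f)"
  have L [simp]: "dom\<^sub>C L = \<^bold>f\<^sup>\<bottom>\<^sub>o \<otimes>\<^sub>o \<^bold>f" "cod\<^sub>C L = \<^bold>f" "iso\<^sub>C L"
    unfolding L_def by simp_all
  have "L \<cdot> ((pi_dual\<^sup>\<bottom> \<otimes> id\<^sub>C \<^bold>f) \<cdot> Delta \<^bold>f) = id\<^sub>C \<^bold>f"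
    unfolding L_def using counit_left[of "\<^bold>f"]
    by (simp add: comp_reduce[of "eps \<^bold>t \<otimes> id\<^sub>C \<^bold>f"] dualize_pi_dual[unfolded dualize_def pi_dual_cod] flip: tensor_comp)
  then have inv: "(pi_dual\<^sup>\<bottom> \<otimes> id\<^sub>C \<^bold>f) \<cdot> Delta \<^bold>f = inv\<^sub>C L"
    by (intro inv_eqI) simp_all
  have "rhoV C \<^bold>t = eps \<^bold>t \<cdot> inv\<^sub>C (L\<^sup>\<bottom>)"
    unfolding rhoV_def L_def ..
  also have "\<dots> = eps \<^bold>t \<cdot> (Delta \<^bold>f)\<^sup>\<bottom> \<cdot> (pi_dual\<^sup>\<bottom> \<otimes> id\<^sub>C \<^bold>f)\<^sup>\<bottom>"
    by (simp add: inv_dual dual_comp flip: inv)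
  also have "\<dots> = nm \<cdot> (id\<^sub>C \<^bold>t \<oplus> pi_dual)"
    unfolding nm_eq_nabla var_def by simp
  finally show ?thesis ..
qed

lemma nm_medial_collapse:
  "rho \<^bold>t \<cdot> ((nm \<otimes> nm) \<cdot> (med \<^bold>t \<^bold>t \<^bold>t \<^bold>t \<cdot> (inv\<^sub>C (rho \<^bold>t) \<oplus> inv\<^sub>C (lam \<^bold>t)))) = nm"
proof -
  let ?X = "\<^bold>t \<oplus>\<^sub>o \<^bold>t"
  have Delta: "med \<^bold>t \<^bold>t \<^bold>t \<^bold>t \<cdot> (inv\<^sub>C (rho \<^bold>t) \<oplus> inv\<^sub>C (lam \<^bold>t)) = Delta ?X"
    using Delta_par[of "\<^bold>t" "\<^bold>t"] by (simp flip: Delta_unit_rho Delta_unit_lam)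
  have rho: "rho \<^bold>t \<cdot> (nm \<otimes> id\<^sub>C \<^bold>t) = nm \<cdot> rho ?X"
    by (rule rho_natural) simp_all
  have "nm \<otimes> nm = (nm \<otimes> id\<^sub>C \<^bold>t) \<cdot> (id\<^sub>C ?X \<otimes> nm)"
    by (simp flip: tensor_comp)
  then have split: "rho \<^bold>t \<cdot> (nm \<otimes> nm) = nm \<cdot> (rho ?X \<cdot> (id\<^sub>C ?X \<otimes> nm))"
    by (simp add: comp_reduce[OF rho])
  have "rho ?X \<cdot> ((id\<^sub>C ?X \<otimes> nm) \<cdot> Delta ?X) = id\<^sub>C ?X"
    using counit_right[of ?X] by (simp add: Pi_par_unit)
  then show ?thesis
    by (simp add: Delta comp_reduce[OF split])
qed

lemma nm_pi_dual_pi_dual: "nm \<cdot> (pi_dual \<oplus> pi_dual) = pi_dual \<cdot> lamV C \<^bold>f"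
proof -
  have "pi_dual \<oplus> pi_dual = (pi_dual \<oplus> id\<^sub>C \<^bold>t) \<cdot> (id\<^sub>C \<^bold>f \<oplus> pi_dual)"
    by (simp flip: par_comp)
  then show ?thesis
    by (simp add: comp_reduce[OF nm_left_unit] lamV_natural)
qed

lemma collapse_to_pi_dual:
  "rho \<^bold>t \<cdot> ((nm \<otimes> nm) \<cdot> (med \<^bold>t \<^bold>t \<^bold>t \<^bold>t \<cdot> ((inv\<^sub>C (rho \<^bold>t) \<oplus> inv\<^sub>C (lam \<^bold>t)) \<cdot>
      ((pi_dual \<oplus> pi_dual) \<cdot> inv\<^sub>C (lamV C \<^bold>f))))) = pi_dual"
  (is "?lhs = _")
proof -
  have "?lhs = (rho \<^bold>t \<cdot> ((nm \<otimes> nm) \<cdot> (med \<^bold>t \<^bold>t \<^bold>t \<^bold>t \<cdot> (inv\<^sub>C (rho \<^bold>t) \<oplus> inv\<^sub>C (lam \<^bold>t)))))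
      \<cdot> ((pi_dual \<oplus> pi_dual) \<cdot> inv\<^sub>C (lamV C \<^bold>f))"
    by simp
  also have "\<dots> = nm \<cdot> ((pi_dual \<oplus> pi_dual) \<cdot> inv\<^sub>C (lamV C \<^bold>f))"
    by (simp only: nm_medial_collapse)
  also have "\<dots> = pi_dual"
    by (simp add: comp_reduce[OF nm_pi_dual_pi_dual])
  finally show ?thesis .
qed

lemma e1_eq_pi_dual: "e1 C = pi_dual"
proof -
  have s1: "lamV C \<^bold>t \<otimes> rhoV C \<^bold>t = (nm \<otimes> nm) \<cdot> ((pi_dual \<oplus> id\<^sub>C \<^bold>t) \<otimes> (id\<^sub>C \<^bold>t \<oplus> pi_dual))"
    by (simp add: tensor_comp flip: nm_left_unit nm_right_unit)
  have s2: "((pi_dual \<oplus> id\<^sub>C \<^bold>t) \<otimes> (id\<^sub>C \<^bold>t \<oplus> pi_dual)) \<cdot> med \<^bold>f \<^bold>t \<^bold>t \<^bold>f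
      = med \<^bold>t \<^bold>t \<^bold>t \<^bold>t \<cdot> ((pi_dual \<otimes> id\<^sub>C \<^bold>t) \<oplus> (id\<^sub>C \<^bold>t \<otimes> pi_dual))"
    by (rule med_natural[symmetric]) simp_all
  have s3: "((pi_dual \<otimes> id\<^sub>C \<^bold>t) \<oplus> (id\<^sub>C \<^bold>t \<otimes> pi_dual)) \<cdot> (inv\<^sub>C (rho \<^bold>f) \<oplus> inv\<^sub>C (lam \<^bold>f))
      = (inv\<^sub>C (rho \<^bold>t) \<oplus> inv\<^sub>C (lam \<^bold>t)) \<cdot> (pi_dual \<oplus> pi_dual)"
    by (simp add: inv_rho_natural inv_lam_natural flip: par_comp)
  have "e1 C = rho \<^bold>t \<cdot> ((lamV C \<^bold>t \<otimes> rhoV C \<^bold>t) \<cdot> (med \<^bold>f \<^bold>t \<^bold>t \<^bold>f \<cdot>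
      ((inv\<^sub>C (rho \<^bold>f) \<oplus> inv\<^sub>C (lam \<^bold>f)) \<cdot> inv\<^sub>C (lamV C \<^bold>f))))"
    unfolding e1_def fob_def ..
  also have "\<dots> = pi_dual"
    by (simp add: s1 comp_reduce[OF s2] comp_reduce[OF s3] collapse_to_pi_dual)
  finally show ?thesis .
qed

lemma e2_eq_pi_dual: "e2 C = pi_dual"
proof -
  have s1: "rhoV C \<^bold>t \<otimes> lamV C \<^bold>t = (nm \<otimes> nm) \<cdot> ((id\<^sub>C \<^bold>t \<oplus> pi_dual) \<otimes> (pi_dual \<oplus> id\<^sub>C \<^bold>t))"
    by (simp add: tensor_comp flip: nm_left_unit nm_right_unit)
  have s2: "((id\<^sub>C \<^bold>t \<oplus> pi_dual) \<otimes> (pi_dual \<oplus> id\<^sub>C \<^bold>t)) \<cdot> med \<^bold>t \<^bold>f \<^bold>f \<^bold>t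
      = med \<^bold>t \<^bold>t \<^bold>t \<^bold>t \<cdot> ((id\<^sub>C \<^bold>t \<otimes> pi_dual) \<oplus> (pi_dual \<otimes> id\<^sub>C \<^bold>t))"
    by (rule med_natural[symmetric]) simp_all
  have s3: "((id\<^sub>C \<^bold>t \<otimes> pi_dual) \<oplus> (pi_dual \<otimes> id\<^sub>C \<^bold>t)) \<cdot> (inv\<^sub>C (lam \<^bold>f) \<oplus> inv\<^sub>C (rho \<^bold>f))
      = (inv\<^sub>C (rho \<^bold>t) \<oplus> inv\<^sub>C (lam \<^bold>t)) \<cdot> (pi_dual \<oplus> pi_dual)"
    by (simp add: inv_rho_natural inv_lam_natural rho_unit_eq_lam_unit flip: par_comp)
  have "e2 C = rho \<^bold>t \<cdot> ((rhoV C \<^bold>t \<otimes> lamV C \<^bold>t) \<cdot> (med \<^bold>t \<^bold>f \<^bold>f \<^bold>t \<cdot>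
      ((inv\<^sub>C (lam \<^bold>f) \<oplus> inv\<^sub>C (rho \<^bold>f)) \<cdot> inv\<^sub>C (lamV C \<^bold>f))))"
    unfolding e2_def fob_def ..
  also have "\<dots> = pi_dual"
    by (simp add: s1 comp_reduce[OF s2] comp_reduce[OF s3] collapse_to_pi_dual)
  finally show ?thesis .
qed

lemma dual_e1_head:
  "twist \<^bold>t \<cdot> (twist \<^bold>t \<cdot> (twist \<^bold>t \<cdot> (eps \<^bold>t \<cdot> ((inv\<^sub>C (lamV C \<^bold>f))\<^sup>\<bottom> \<cdot>
      (inv\<^sub>C (rho \<^bold>f) \<oplus> inv\<^sub>C (lam \<^bold>f))\<^sup>\<bottom>))))
    = rho \<^bold>t \<cdot> ((rhoV C \<^bold>t \<otimes> lamV C \<^bold>t) \<cdot> (((eps \<^bold>t \<oplus> id\<^sub>C \<^bold>f) \<otimes> (id\<^sub>C \<^bold>f \<oplus> eps \<^bold>t)) \<cdot>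
      ((dmt C \<^bold>t \<^bold>f \<otimes> dmt C \<^bold>f \<^bold>t) \<cdot> eps ((\<^bold>t \<otimes>\<^sub>o \<^bold>f)\<^sup>\<bottom>\<^sub>o \<otimes>\<^sub>o (\<^bold>f \<otimes>\<^sub>o \<^bold>t)\<^sup>\<bottom>\<^sub>o))))"
proof -
  let ?k = "(inv\<^sub>C (lam \<^bold>f))\<^sup>\<bottom> \<otimes> (inv\<^sub>C (rho \<^bold>f))\<^sup>\<bottom>"
  have units: "(rhoV C \<^bold>t \<otimes> lamV C \<^bold>t) \<cdot> (((eps \<^bold>t \<oplus> id\<^sub>C \<^bold>f) \<otimes> (id\<^sub>C \<^bold>f \<oplus> eps \<^bold>t)) \<cdot> (dmt C \<^bold>t \<^bold>f \<otimes> dmt C \<^bold>f \<^bold>t))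
      = (twist \<^bold>t \<otimes> twist \<^bold>t) \<cdot> ((eps \<^bold>t \<otimes> eps \<^bold>t) \<cdot> ?k)"
    using dual_inv_lam[of "\<^bold>t"] dual_inv_rho[of "\<^bold>t"] by (simp flip: tensor_comp)
  have eps: "eps (\<^bold>f\<^sup>\<bottom>\<^sub>o \<otimes>\<^sub>o \<^bold>f\<^sup>\<bottom>\<^sub>o) \<cdot> (inv\<^sub>C (rho \<^bold>f) \<oplus> inv\<^sub>C (lam \<^bold>f))\<^sup>\<bottom>
      = ?k \<cdot> eps ((\<^bold>t \<otimes>\<^sub>o \<^bold>f)\<^sup>\<bottom>\<^sub>o \<otimes>\<^sub>o (\<^bold>f \<otimes>\<^sub>o \<^bold>t)\<^sup>\<bottom>\<^sub>o)"
    unfolding var_def by (rule eps_natural[symmetric]) simp_all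
  show ?thesis
    by (simp add: comp_reduce3[OF units] comp_reduce[OF rho_unit_tensor] eps[symmetric]
        comp_reduce3[OF dual_inv_lamV[of "\<^bold>t", symmetric]])
qed

lemma dual_e1_medial:
  "((eps \<^bold>t \<oplus> id\<^sub>C \<^bold>f) \<otimes> (id\<^sub>C \<^bold>f \<oplus> eps \<^bold>t)) \<cdot> ((dmt C \<^bold>t \<^bold>f \<otimes> dmt C \<^bold>f \<^bold>t) \<cdot>
      (eps ((\<^bold>t \<otimes>\<^sub>o \<^bold>f)\<^sup>\<bottom>\<^sub>o \<otimes>\<^sub>o (\<^bold>f \<otimes>\<^sub>o \<^bold>t)\<^sup>\<bottom>\<^sub>o) \<cdot> (med \<^bold>f \<^bold>t \<^bold>t \<^bold>f)\<^sup>\<bottom>))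
    = med \<^bold>t \<^bold>f \<^bold>f \<^bold>t \<cdot> (((eps \<^bold>t \<otimes> id\<^sub>C \<^bold>f) \<oplus> (id\<^sub>C \<^bold>f \<otimes> eps \<^bold>t)) \<cdot>
      ((eps (\<^bold>f\<^sup>\<bottom>\<^sub>o \<otimes>\<^sub>o \<^bold>f) \<oplus> eps (\<^bold>f \<otimes>\<^sub>o \<^bold>f\<^sup>\<bottom>\<^sub>o)) \<cdot> dmt C ((\<^bold>f \<otimes>\<^sub>o \<^bold>f\<^sup>\<bottom>\<^sub>o)\<^sup>\<bottom>\<^sub>o) ((\<^bold>f\<^sup>\<bottom>\<^sub>o \<otimes>\<^sub>o \<^bold>f)\<^sup>\<bottom>\<^sub>o)))"
proof -
  have selfdual: "(dmt C \<^bold>t \<^bold>f \<otimes> dmt C \<^bold>f \<^bold>t) \<cdot> (eps ((\<^bold>t \<otimes>\<^sub>o \<^bold>f)\<^sup>\<bottom>\<^sub>o \<otimes>\<^sub>o (\<^bold>f \<otimes>\<^sub>o \<^bold>t)\<^sup>\<bottom>\<^sub>o) \<cdot> (med \<^bold>f \<^bold>t \<^bold>t \<^bold>f)\<^sup>\<bottom>)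
      = med (\<^bold>f\<^sup>\<bottom>\<^sub>o) \<^bold>f \<^bold>f (\<^bold>f\<^sup>\<bottom>\<^sub>o) \<cdot> ((eps (\<^bold>f\<^sup>\<bottom>\<^sub>o \<otimes>\<^sub>o \<^bold>f) \<oplus> eps (\<^bold>f \<otimes>\<^sub>o \<^bold>f\<^sup>\<bottom>\<^sub>o)) \<cdot>
          dmt C ((\<^bold>f \<otimes>\<^sub>o \<^bold>f\<^sup>\<bottom>\<^sub>o)\<^sup>\<bottom>\<^sub>o) ((\<^bold>f\<^sup>\<bottom>\<^sub>o \<otimes>\<^sub>o \<^bold>f)\<^sup>\<bottom>\<^sub>o))"
    using medial_selfdual unfolding medial_selfdual_def vob_def by blast
  have natural: "((eps \<^bold>t \<oplus> id\<^sub>C \<^bold>f) \<otimes> (id\<^sub>C \<^bold>f \<oplus> eps \<^bold>t)) \<cdot> med (\<^bold>f\<^sup>\<bottom>\<^sub>o) \<^bold>f \<^bold>f (\<^bold>f\<^sup>\<bottom>\<^sub>o)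
      = med \<^bold>t \<^bold>f \<^bold>f \<^bold>t \<cdot> ((eps \<^bold>t \<otimes> id\<^sub>C \<^bold>f) \<oplus> (id\<^sub>C \<^bold>f \<otimes> eps \<^bold>t))"
    by (rule med_natural[symmetric]) simp_all
  show ?thesis
    by (simp add: selfdual comp_reduce[OF natural])
qed

lemma dual_e1_tail:
  "((eps \<^bold>t \<otimes> id\<^sub>C \<^bold>f) \<oplus> (id\<^sub>C \<^bold>f \<otimes> eps \<^bold>t)) \<cdot> ((eps (\<^bold>f\<^sup>\<bottom>\<^sub>o \<otimes>\<^sub>o \<^bold>f) \<oplus> eps (\<^bold>f \<otimes>\<^sub>o \<^bold>f\<^sup>\<bottom>\<^sub>o)) \<cdot>
      (dmt C ((\<^bold>f \<otimes>\<^sub>o \<^bold>f\<^sup>\<bottom>\<^sub>o)\<^sup>\<bottom>\<^sub>o) ((\<^bold>f\<^sup>\<bottom>\<^sub>o \<otimes>\<^sub>o \<^bold>f)\<^sup>\<bottom>\<^sub>o) \<cdot> ((lamV C \<^bold>t \<otimes> rhoV C \<^bold>t)\<^sup>\<bottom> \<cdot> (rho \<^bold>t)\<^sup>\<bottom>)))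
    = (inv\<^sub>C (lam \<^bold>f) \<oplus> inv\<^sub>C (rho \<^bold>f)) \<cdot> (inv\<^sub>C (lamV C \<^bold>f) \<cdot>
      (dual_twist \<^bold>t \<cdot> (dual_twist \<^bold>t \<cdot> dual_twist \<^bold>t)))"
proof -
  have tensor: "dmt C ((\<^bold>f \<otimes>\<^sub>o \<^bold>f\<^sup>\<bottom>\<^sub>o)\<^sup>\<bottom>\<^sub>o) ((\<^bold>f\<^sup>\<bottom>\<^sub>o \<otimes>\<^sub>o \<^bold>f)\<^sup>\<bottom>\<^sub>o) \<cdot> (lamV C \<^bold>t \<otimes> rhoV C \<^bold>t)\<^sup>\<bottom>
      = ((rhoV C \<^bold>t)\<^sup>\<bottom> \<oplus> (lamV C \<^bold>t)\<^sup>\<bottom>) \<cdot> dmt C \<^bold>t \<^bold>t"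
    using dual_tensor_natural[of "lamV C \<^bold>t" "rhoV C \<^bold>t"] by simp
  have units: "((eps \<^bold>t \<otimes> id\<^sub>C \<^bold>f) \<oplus> (id\<^sub>C \<^bold>f \<otimes> eps \<^bold>t)) \<cdot> ((eps (\<^bold>f\<^sup>\<bottom>\<^sub>o \<otimes>\<^sub>o \<^bold>f) \<oplus> eps (\<^bold>f \<otimes>\<^sub>o \<^bold>f\<^sup>\<bottom>\<^sub>o)) \<cdot>
      ((rhoV C \<^bold>t)\<^sup>\<bottom> \<oplus> (lamV C \<^bold>t)\<^sup>\<bottom>))
      = (inv\<^sub>C (lam \<^bold>f) \<oplus> inv\<^sub>C (rho \<^bold>f)) \<cdot> (dual_twist \<^bold>t \<oplus> dual_twist \<^bold>t)"
    using dual_rhoV[of "\<^bold>t"] dual_lamV[of "\<^bold>t"] by (simp flip: par_comp)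
  show ?thesis
    by (simp add: comp_reduce[OF tensor] comp_reduce3[OF units] dual_twist_par_commute)
      (simp add: comp_reduce[OF dual_rho])
qed

text \<open>One twist for each of the three pairs of unit isomorphisms that dualization exchanges.\<close>

lemma twisted_dualize_e1:
  "twist \<^bold>t \<cdot> (twist \<^bold>t \<cdot> (twist \<^bold>t \<cdot> dualize (e1 C))) = e2 C \<cdot> (dual_twist \<^bold>t \<cdot> (dual_twist \<^bold>t \<cdot> dual_twist \<^bold>t))"
proof -
  let ?v = "twist \<^bold>t" and ?u = "dual_twist \<^bold>t"
  let ?units = "(inv\<^sub>C (lamV C \<^bold>f))\<^sup>\<bottom> \<cdot> (inv\<^sub>C (rho \<^bold>f) \<oplus> inv\<^sub>C (lam \<^bold>f))\<^sup>\<bottom>"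
  let ?dual_units = "(lamV C \<^bold>t \<otimes> rhoV C \<^bold>t)\<^sup>\<bottom> \<cdot> (rho \<^bold>t)\<^sup>\<bottom>"
  let ?W1 = "(eps \<^bold>t \<oplus> id\<^sub>C \<^bold>f) \<otimes> (id\<^sub>C \<^bold>f \<oplus> eps \<^bold>t)"
  let ?W2 = "(eps \<^bold>t \<otimes> id\<^sub>C \<^bold>f) \<oplus> (id\<^sub>C \<^bold>f \<otimes> eps \<^bold>t)"
  let ?D = "dmt C \<^bold>t \<^bold>f \<otimes> dmt C \<^bold>f \<^bold>t"
  let ?D' = "dmt C ((\<^bold>f \<otimes>\<^sub>o \<^bold>f\<^sup>\<bottom>\<^sub>o)\<^sup>\<bottom>\<^sub>o) ((\<^bold>f\<^sup>\<bottom>\<^sub>o \<otimes>\<^sub>o \<^bold>f)\<^sup>\<bottom>\<^sub>o)"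
  let ?E = "eps (\<^bold>f\<^sup>\<bottom>\<^sub>o \<otimes>\<^sub>o \<^bold>f) \<oplus> eps (\<^bold>f \<otimes>\<^sub>o \<^bold>f\<^sup>\<bottom>\<^sub>o)"
  let ?X = "(\<^bold>t \<otimes>\<^sub>o \<^bold>f)\<^sup>\<bottom>\<^sub>o \<otimes>\<^sub>o (\<^bold>f \<otimes>\<^sub>o \<^bold>t)\<^sup>\<bottom>\<^sub>o"
  have "?v \<cdot> (?v \<cdot> (?v \<cdot> dualize (e1 C)))
      = (?v \<cdot> (?v \<cdot> (?v \<cdot> (eps \<^bold>t \<cdot> ?units)))) \<cdot> ((med \<^bold>f \<^bold>t \<^bold>t \<^bold>f)\<^sup>\<bottom> \<cdot> ?dual_units)"
    unfolding dualize_def e1_def fob_def by (simp add: dual_comp)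
  also have "\<dots> = (rho \<^bold>t \<cdot> ((rhoV C \<^bold>t \<otimes> lamV C \<^bold>t) \<cdot> (?W1 \<cdot> (?D \<cdot> eps ?X))))
      \<cdot> ((med \<^bold>f \<^bold>t \<^bold>t \<^bold>f)\<^sup>\<bottom> \<cdot> ?dual_units)"
    by (simp only: dual_e1_head)
  also have "\<dots> = (rho \<^bold>t \<cdot> (rhoV C \<^bold>t \<otimes> lamV C \<^bold>t))
      \<cdot> ((?W1 \<cdot> (?D \<cdot> (eps ?X \<cdot> (med \<^bold>f \<^bold>t \<^bold>t \<^bold>f)\<^sup>\<bottom>))) \<cdot> ?dual_units)"
    by simp
  also have "\<dots> = (rho \<^bold>t \<cdot> (rhoV C \<^bold>t \<otimes> lamV C \<^bold>t)) \<cdot> ((med \<^bold>t \<^bold>f \<^bold>f \<^bold>t \<cdot> (?W2 \<cdot> (?E \<cdot> ?D'))) \<cdot> ?dual_units)"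
    by (simp only: dual_e1_medial)
  also have "\<dots> = (rho \<^bold>t \<cdot> ((rhoV C \<^bold>t \<otimes> lamV C \<^bold>t) \<cdot> med \<^bold>t \<^bold>f \<^bold>f \<^bold>t)) \<cdot> (?W2 \<cdot> (?E \<cdot> (?D' \<cdot> ?dual_units)))"
    by simp
  also have "\<dots> = (rho \<^bold>t \<cdot> ((rhoV C \<^bold>t \<otimes> lamV C \<^bold>t) \<cdot> med \<^bold>t \<^bold>f \<^bold>f \<^bold>t))
      \<cdot> ((inv\<^sub>C (lam \<^bold>f) \<oplus> inv\<^sub>C (rho \<^bold>f)) \<cdot> (inv\<^sub>C (lamV C \<^bold>f) \<cdot> (?u \<cdot> (?u \<cdot> ?u))))"
    by (simp only: dual_e1_tail)
  also have "\<dots> = e2 C \<cdot> (?u \<cdot> (?u \<cdot> ?u))"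
    unfolding e2_def fob_def by simp
  finally show ?thesis .
qed

lemma dualize_e1: "dualize (e1 C) = e2 C"
proof -
  have e2: "dom\<^sub>C (e2 C) = \<^bold>f" "cod\<^sub>C (e2 C) = \<^bold>t" and e1: "dom\<^sub>C (dualize (e1 C)) = \<^bold>f" "cod\<^sub>C (dualize (e1 C)) = \<^bold>t"
    unfolding e2_eq_pi_dual e1_eq_pi_dual dualize_def by simp_all
  have "twist \<^bold>t \<cdot> e2 C = e2 C \<cdot> dual_twist \<^bold>t"
    using e2 by (rule twist_commute)
  then have "twist \<^bold>t \<cdot> (twist \<^bold>t \<cdot> (twist \<^bold>t \<cdot> dualize (e1 C))) = twist \<^bold>t \<cdot> (twist \<^bold>t \<cdot> (twist \<^bold>t \<cdot> e2 C))"
    unfolding twisted_dualize_e1 using e2 by (simp add: comp_reduce[OF \<open>twist \<^bold>t \<cdot> e2 C = _\<close>])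
  then show ?thesis
    using e1 e2 by (simp add: iso_cancel_left_iff)
qed

end

theorem theorem7:
  fixes C :: "('o, 'm) sacat" and F :: "'o \<Rightarrow> 'b::boolean_algebra"
  assumes "B3 C F"
  shows "cpi C (fob C) = e1 C \<and> e1 C = e2 C \<and> e2 C = camalg C (tunit C) \<and> single_mixed C"
proof -
  have "B2 C F"
    using assms unfolding B3_def by blast
  moreover from this have "star_autonomous C"
    unfolding B2_def B1_def by blast
  ultimately interpret b3_category C F
    using assms by unfold_locales
  have "Pi \<^bold>f = dualize (e1 C)"
    using dualize_pi_dual by (simp add: e1_eq_pi_dual)
  then have Pi: "Pi \<^bold>f = pi_dual"
    using dualize_e1 e2_eq_pi_dual by simp
  have amalg: "camalg C \<^bold>t = pi_dual"
    using Pi dualize_pi_dual unfolding camalg_def dualize_def by simp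
  show ?thesis
    unfolding single_mixed_def fob_def using Pi amalg e1_eq_pi_dual e2_eq_pi_dual by simp
qed

end
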